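(* Let $\Lambda$ be a finite $k$-graph each of whose coordinate matrices $A_1,\dots,A_k$ is irreducible. Suppose there exist an $\mathbb{R}_+$-functor $y$ on $\Lambda$ and $\beta\in(0,\infty)$ such that for all $\lambda,\nu\in\Lambda$, $$y(\lambda)+\tfrac1\beta\ln\big(\rho(B(y,\beta))^{d(\lambda)}\big)=y(\nu)+\tfrac1\beta\ln\big(\rho(B(y,\beta))^{d(\nu)}\big)\ \Longrightarrow\ d(\lambda)=d(\nu).$$ Then $\Lambda$ is aperiodic.
   Context: A $k$-graph is a countable small category $\Lambda$ with a degree functor $d:\Lambda\to\mathbb{N}^k$ satisfying unique factorization: if $d(\lambda)=m+n$ there are unique $\eta,\nu$ with $\lambda=\eta\nu$, $d(\eta)=m$, $d(\nu)=n$. $\Lambda^n=d^{-1}(n)$, $\Lambda^0$ = vertices, $r,s$ range/source, $v\Lambda^nw$ paths of degree $n$ from $w$ to $v$; finite: each $\Lambda^n$ finite. Coordinate matrices: $A_i(v,w)=|v\Lambda^{e_i}w|$; a square nonnegative matrix is irreducible if for every pair of indices $(v,w)$ some power has positive $(v,w)$ entry. (Coordinatewise irreducibility implies $\Lambda$ is strongly connected, i.e. $v\Lambda w\neq\emptyset$ for all vertices.) An $\mathbb{R}_+$-functor is $y:\Lambda\to[0,\infty)$ with $y(v)=0$ on vertices and $y(\lambda\nu)=y(\lambda)+y(\nu)$ when $s(\lambda)=r(\nu)$. $B_i(y,\beta)_{v,w}=\sum_{\lambda\in v\Lambda^{e_i}w}e^{-\beta y(\lambda)}$; $\rho$ = spectral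 radius ($>0$); $\rho(B(y,\beta))^m=\prod_i\rho(B_i(y,\beta))^{m_i}$. $\Lambda^\infty$: degree-preserving functors from $\Omega_k$ (objects $\mathbb{N}^k$, morphisms $(m,n)$, $m\le n$, $d(m,n)=n-m$) into $\Lambda$; $Z(v)=\{x:x(0,0)=v\}$; $\sigma^j(x)(m,n)=x(m+j,n+j)$. $\mathrm{Per}(v)$ is the subgroup of $\mathbb{Z}^k$ generated by $\{m-n:\sigma^m(x)=\sigma^n(x)\ \forall x\in Z(v)\}$; for strongly connected finite $\Lambda$ it is independent of $v$, denoted $\mathrm{Per}\,\Lambda$; $\Lambda$ is aperiodic iff $\mathrm{Per}\,\Lambda=\{0\}$. *)

theory Defs
  imports Complex_Main "HOL-Library.Countable_Set"
begin

text \<open>Degrees: elements of N^k are encoded as functions nat => nat vanishing outside {..<k}.\<close>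
definition Nk :: "nat \<Rightarrow> (nat \<Rightarrow> nat) set" where
  "Nk k = {m. \<forall>i\<ge>k. m i = 0}"

definition unitvec :: "nat \<Rightarrow> nat \<Rightarrow> nat" where
  "unitvec i = (\<lambda>j. if j = i then 1 else 0)"

text \<open>A k-graph: morphism set Mor, range r, source s, composition cmp (meaningful when
  s a = r b), degree functor d.  Objects are identified with identity morphisms.\<close>
definition kgraph :: "nat \<Rightarrow> 'a set \<Rightarrow> ('a \<Rightarrow> 'a) \<Rightarrow> ('a \<Rightarrow> 'a) \<Rightarrow> ('a \<Rightarrow> 'a \<Rightarrow> 'a)
    \<Rightarrow> ('a \<Rightarrow> nat \<Rightarrow> nat) \<Rightarrow> bool" where
  "kgraph k Mor r s cmp d \<longleftrightarrow>
     countable Mor \<and>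
     (\<forall>l\<in>Mor. r l \<in> Mor \<and> s l \<in> Mor \<and> d (r l) = (\<lambda>_. 0) \<and> d (s l) = (\<lambda>_. 0)) \<and>
     (\<forall>v\<in>Mor. d v = (\<lambda>_. 0) \<longrightarrow> r v = v \<and> s v = v) \<and>
     (\<forall>l\<in>Mor. cmp (r l) l = l \<and> cmp l (s l) = l) \<and>
     (\<forall>a\<in>Mor. \<forall>b\<in>Mor. s a = r b \<longrightarrow>
        cmp a b \<in> Mor \<and> r (cmp a b) = r a \<and> s (cmp a b) = s b \<and>
        d (cmp a b) = (\<lambda>i. d a i + d b i)) \<and>
     (\<forall>a\<in>Mor. \<forall>b\<in>Mor. \<forall>c\<in>Mor. s a = r b \<and> s b = r c \<longrightarrow>
        cmp (cmp a b) c = cmp a (cmp b c)) \<and>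
     (\<forall>l\<in>Mor. d l \<in> Nk k) \<and>
     (\<forall>l\<in>Mor. \<forall>m\<in>Nk k. \<forall>n\<in>Nk k. d l = (\<lambda>i. m i + n i) \<longrightarrow>
        (\<exists>!p. fst p \<in> Mor \<and> snd p \<in> Mor \<and> s (fst p) = r (snd p) \<and>
              l = cmp (fst p) (snd p) \<and> d (fst p) = m \<and> d (snd p) = n))"

definition finite_kgraph :: "nat \<Rightarrow> 'a set \<Rightarrow> ('a \<Rightarrow> nat \<Rightarrow> nat) \<Rightarrow> bool" where
  "finite_kgraph k Mor d \<longleftrightarrow> (\<forall>n\<in>Nk k. finite {l\<in>Mor. d l = n})"

definition vertices :: "'a set \<Rightarrow> ('a \<Rightarrow> nat \<Rightarrow> nat) \<Rightarrow> 'a set" where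
  "vertices Mor d = {l\<in>Mor. d l = (\<lambda>_. 0)}"

definition paths_between :: "'a set \<Rightarrow> ('a \<Rightarrow> 'a) \<Rightarrow> ('a \<Rightarrow> 'a) \<Rightarrow> ('a \<Rightarrow> nat \<Rightarrow> nat)
    \<Rightarrow> 'a \<Rightarrow> (nat \<Rightarrow> nat) \<Rightarrow> 'a \<Rightarrow> 'a set" where
  "paths_between Mor r s d v n w = {l\<in>Mor. d l = n \<and> r l = v \<and> s l = w}"

fun mat_pow :: "'a set \<Rightarrow> ('a \<Rightarrow> 'a \<Rightarrow> real) \<Rightarrow> nat \<Rightarrow> 'a \<Rightarrow> 'a \<Rightarrow> real" where
  "mat_pow V M 0 = (\<lambda>v w. if v = w then 1 else 0)"
| "mat_pow V M (Suc n) = (\<lambda>v w. \<Sum>u\<in>V. mat_pow V M n v u * M u w)"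

definition irreducible_mat :: "'a set \<Rightarrow> ('a \<Rightarrow> 'a \<Rightarrow> real) \<Rightarrow> bool" where
  "irreducible_mat V M \<longleftrightarrow> (\<forall>v\<in>V. \<forall>w\<in>V. \<exists>n\<ge>1. mat_pow V M n v w > 0)"

definition mat_eigenvalue :: "'a set \<Rightarrow> ('a \<Rightarrow> 'a \<Rightarrow> real) \<Rightarrow> complex \<Rightarrow> bool" where
  "mat_eigenvalue V M c \<longleftrightarrow> (\<exists>z :: 'a \<Rightarrow> complex. (\<exists>v\<in>V. z v \<noteq> 0) \<and>
      (\<forall>v\<in>V. (\<Sum>w\<in>V. complex_of_real (M v w) * z w) = c * z v))"

definition spectral_radius_mat :: "'a set \<Rightarrow> ('a \<Rightarrow> 'a \<Rightarrow> real) \<Rightarrow> real" where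
  "spectral_radius_mat V M = Max {cmod c | c. mat_eigenvalue V M c}"

definition coord_mat :: "'a set \<Rightarrow> ('a \<Rightarrow> 'a) \<Rightarrow> ('a \<Rightarrow> 'a) \<Rightarrow> ('a \<Rightarrow> nat \<Rightarrow> nat)
    \<Rightarrow> nat \<Rightarrow> 'a \<Rightarrow> 'a \<Rightarrow> real" where
  "coord_mat Mor r s d i v w = real (card (paths_between Mor r s d v (unitvec i) w))"

definition B_mat :: "'a set \<Rightarrow> ('a \<Rightarrow> 'a) \<Rightarrow> ('a \<Rightarrow> 'a) \<Rightarrow> ('a \<Rightarrow> nat \<Rightarrow> nat)
    \<Rightarrow> ('a \<Rightarrow> real) \<Rightarrow> real \<Rightarrow> nat \<Rightarrow> 'a \<Rightarrow> 'a \<Rightarrow> real" where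
  "B_mat Mor r s d y \<beta> i v w = (\<Sum>l\<in>paths_between Mor r s d v (unitvec i) w. exp (- \<beta> * y l))"

definition rplus_functor :: "'a set \<Rightarrow> ('a \<Rightarrow> 'a) \<Rightarrow> ('a \<Rightarrow> 'a) \<Rightarrow> ('a \<Rightarrow> 'a \<Rightarrow> 'a)
    \<Rightarrow> ('a \<Rightarrow> nat \<Rightarrow> nat) \<Rightarrow> ('a \<Rightarrow> real) \<Rightarrow> bool" where
  "rplus_functor Mor r s cmp d y \<longleftrightarrow>
     (\<forall>l\<in>Mor. y l \<ge> 0) \<and> (\<forall>v\<in>vertices Mor d. y v = 0) \<and>
     (\<forall>a\<in>Mor. \<forall>b\<in>Mor. s a = r b \<longrightarrow> y (cmp a b) = y a + y b)"

text \<open>Infinite paths: degree-preserving functors Omega_k -> Lambda, given by their values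
  on morphisms (m,n), m <= n in N^k.\<close>
definition inf_paths :: "nat \<Rightarrow> 'a set \<Rightarrow> ('a \<Rightarrow> 'a) \<Rightarrow> ('a \<Rightarrow> 'a) \<Rightarrow> ('a \<Rightarrow> 'a \<Rightarrow> 'a)
    \<Rightarrow> ('a \<Rightarrow> nat \<Rightarrow> nat) \<Rightarrow> ((nat \<Rightarrow> nat) \<Rightarrow> (nat \<Rightarrow> nat) \<Rightarrow> 'a) set" where
  "inf_paths k Mor r s cmp d = {x. \<forall>m\<in>Nk k. \<forall>n\<in>Nk k. m \<le> n \<longrightarrow>
      x m n \<in> Mor \<and> d (x m n) = (\<lambda>i. n i - m i) \<and>
      (\<forall>p\<in>Nk k. n \<le> p \<longrightarrow> s (x m n) = r (x n p) \<and> x m p = cmp (x m n) (x n p))}"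

definition Zcyl :: "nat \<Rightarrow> 'a set \<Rightarrow> ('a \<Rightarrow> 'a) \<Rightarrow> ('a \<Rightarrow> 'a) \<Rightarrow> ('a \<Rightarrow> 'a \<Rightarrow> 'a)
    \<Rightarrow> ('a \<Rightarrow> nat \<Rightarrow> nat) \<Rightarrow> 'a \<Rightarrow> ((nat \<Rightarrow> nat) \<Rightarrow> (nat \<Rightarrow> nat) \<Rightarrow> 'a) set" where
  "Zcyl k Mor r s cmp d v = {x\<in>inf_paths k Mor r s cmp d. x (\<lambda>_. 0) (\<lambda>_. 0) = v}"

definition shift :: "(nat \<Rightarrow> nat) \<Rightarrow> ((nat \<Rightarrow> nat) \<Rightarrow> (nat \<Rightarrow> nat) \<Rightarrow> 'a)
    \<Rightarrow> (nat \<Rightarrow> nat) \<Rightarrow> (nat \<Rightarrow> nat) \<Rightarrow> 'a" where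
  "shift j x = (\<lambda>m n. x (\<lambda>i. m i + j i) (\<lambda>i. n i + j i))"

text \<open>Equality of infinite paths = equality as functors on Omega_k.\<close>
definition path_eq :: "nat \<Rightarrow> ((nat \<Rightarrow> nat) \<Rightarrow> (nat \<Rightarrow> nat) \<Rightarrow> 'a)
    \<Rightarrow> ((nat \<Rightarrow> nat) \<Rightarrow> (nat \<Rightarrow> nat) \<Rightarrow> 'a) \<Rightarrow> bool" where
  "path_eq k x x' \<longleftrightarrow> (\<forall>m\<in>Nk k. \<forall>n\<in>Nk k. m \<le> n \<longrightarrow> x m n = x' m n)"

definition per_gens :: "nat \<Rightarrow> 'a set \<Rightarrow> ('a \<Rightarrow> 'a) \<Rightarrow> ('a \<Rightarrow> 'a) \<Rightarrow> ('a \<Rightarrow> 'a \<Rightarrow> 'a)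
    \<Rightarrow> ('a \<Rightarrow> nat \<Rightarrow> nat) \<Rightarrow> 'a \<Rightarrow> (nat \<Rightarrow> int) set" where
  "per_gens k Mor r s cmp d v = {(\<lambda>i. int (m i) - int (n i)) | m n.
      m \<in> Nk k \<and> n \<in> Nk k \<and>
      (\<forall>x\<in>Zcyl k Mor r s cmp d v. path_eq k (shift m x) (shift n x))}"

inductive_set gen_subgroup :: "(nat \<Rightarrow> int) set \<Rightarrow> (nat \<Rightarrow> int) set" for S where
  zero: "(\<lambda>_. 0) \<in> gen_subgroup S"
| gen: "g \<in> S \<Longrightarrow> g \<in> gen_subgroup S"
| diff: "a \<in> gen_subgroup S \<Longrightarrow> b \<in> gen_subgroup S \<Longrightarrow> (\<lambda>i. a i - b i) \<in> gen_subgroup S"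

definition Per :: "nat \<Rightarrow> 'a set \<Rightarrow> ('a \<Rightarrow> 'a) \<Rightarrow> ('a \<Rightarrow> 'a) \<Rightarrow> ('a \<Rightarrow> 'a \<Rightarrow> 'a)
    \<Rightarrow> ('a \<Rightarrow> nat \<Rightarrow> nat) \<Rightarrow> 'a \<Rightarrow> (nat \<Rightarrow> int) set" where
  "Per k Mor r s cmp d v = gen_subgroup (per_gens k Mor r s cmp d v)"

definition aperiodic :: "nat \<Rightarrow> 'a set \<Rightarrow> ('a \<Rightarrow> 'a) \<Rightarrow> ('a \<Rightarrow> 'a) \<Rightarrow> ('a \<Rightarrow> 'a \<Rightarrow> 'a)
    \<Rightarrow> ('a \<Rightarrow> nat \<Rightarrow> nat) \<Rightarrow> bool" where
  "aperiodic k Mor r s cmp d \<longleftrightarrow>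
     (\<forall>v\<in>vertices Mor d. Per k Mor r s cmp d v = {(\<lambda>_. 0)})"

end

theory Submission
  imports Defs "Jordan_Normal_Form.Spectral_Radius"
begin

text \<open>
  The matrices \<open>B\<^sub>i = B\<^sub>i(y, \<beta>)\<close> commute, because \<open>B\<^sub>i B\<^sub>j\<close> and \<open>B\<^sub>j B\<^sub>i\<close> both sum over the paths of
  degree \<open>e\<^sub>i + e\<^sub>j\<close>. By Perron--Frobenius they therefore share a positive eigenvector \<open>u\<close>, with
  eigenvalues \<open>\<rho>\<^sub>i = \<rho>(B\<^sub>i)\<close>, and the paths \<open>\<alpha>\<close> of degree \<open>p\<close> from a vertex \<open>w\<close> have total weight
  \<open>\<Sum> exp(-\<beta> y(\<alpha>)) u(s(\<alpha>)) = \<rho>\<^sup>p u(w)\<close>.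

  If \<open>\<sigma>\<^sup>m = \<sigma>\<^sup>n\<close> on \<open>Z(v)\<close>, choose a path \<open>\<zeta>\<close> from \<open>v\<close> of degree \<open>a \<ge> m, n\<close>. Then
  \<open>\<zeta>(m, a) \<Lambda>\<^sup>m = \<zeta>(n, a) \<Lambda>\<^sup>n\<close>, and comparing the weights of the two sides gives
  \<open>exp(-\<beta> y(\<zeta>(m, a))) \<rho>\<^sup>m = exp(-\<beta> y(\<zeta>(n, a))) \<rho>\<^sup>n\<close>; that is, \<open>\<zeta>(m, a)\<close> and \<open>\<zeta>(n, a)\<close> have the
  same value of \<open>y + \<beta>\<^sup>-\<^sup>1 ln \<rho>\<^sup>d\<close>. The hypothesis forces their degrees \<open>a - m\<close> and \<open>a - n\<close> to agree,
  so \<open>m = n\<close>.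
\<close>

section \<open>Nonnegative irreducible matrices\<close>

definition mat_mult_vec :: "'a set \<Rightarrow> ('a \<Rightarrow> 'a \<Rightarrow> real) \<Rightarrow> ('a \<Rightarrow> real) \<Rightarrow> 'a \<Rightarrow> real" where
  "mat_mult_vec V M h = (\<lambda>v. \<Sum>w\<in>V. M v w * h w)"

definition nonneg_mat :: "'a set \<Rightarrow> ('a \<Rightarrow> 'a \<Rightarrow> real) \<Rightarrow> bool" where
  "nonneg_mat V M \<longleftrightarrow> (\<forall>v\<in>V. \<forall>w\<in>V. 0 \<le> M v w)"

definition prob_vec :: "'a set \<Rightarrow> ('a \<Rightarrow> real) \<Rightarrow> bool" where
  "prob_vec V x \<longleftrightarrow> (\<forall>v\<in>V. 0 \<le> x v) \<and> (\<Sum>v\<in>V. x v) = 1"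

lemma sum_nonneg_pos_iff:
  fixes f :: "'b \<Rightarrow> real"
  assumes "finite A" and "\<forall>x\<in>A. 0 \<le> f x"
  shows "(\<Sum>x\<in>A. f x) > 0 \<longleftrightarrow> (\<exists>x\<in>A. f x > 0)"
proof
  assume "(\<Sum>x\<in>A. f x) > 0"
  moreover have "(\<Sum>x\<in>A. f x) \<le> 0" if "\<forall>x\<in>A. f x \<le> 0"
    using that by (simp add: sum_nonpos)
  ultimately show "\<exists>x\<in>A. f x > 0" by force
next
  assume "\<exists>x\<in>A. f x > 0"
  then show "(\<Sum>x\<in>A. f x) > 0" using assms sum_pos2[of A _ f] by blast
qed

lemma mat_mult_vec_nonneg:
  "nonneg_mat V M \<Longrightarrow> \<forall>w\<in>V. 0 \<le> h w \<Longrightarrow> v \<in> V \<Longrightarrow> 0 \<le> mat_mult_vec V M h v"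
  unfolding mat_mult_vec_def nonneg_mat_def by (auto intro!: sum_nonneg)

lemma mat_pow_nonneg: "nonneg_mat V M \<Longrightarrow> v \<in> V \<Longrightarrow> w \<in> V \<Longrightarrow> 0 \<le> mat_pow V M n v w"
  by (induction n arbitrary: w) (auto simp: nonneg_mat_def intro!: sum_nonneg)

lemma mat_pow_Suc_pos_iff:
  assumes "finite V" "nonneg_mat V M" "v \<in> V" "w \<in> V"
  shows "mat_pow V M (Suc n) v w > 0 \<longleftrightarrow> (\<exists>u\<in>V. mat_pow V M n v u > 0 \<and> M u w > 0)"
proof -
  have nonneg: "0 \<le> mat_pow V M n v u" "0 \<le> M u w" if "u \<in> V" for u
    using mat_pow_nonneg[OF assms(2,3) that] assms(2,4) that by (auto simp: nonneg_mat_def)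
  have "mat_pow V M (Suc n) v w > 0 \<longleftrightarrow> (\<exists>u\<in>V. mat_pow V M n v u * M u w > 0)"
    unfolding mat_pow.simps by (intro sum_nonneg_pos_iff[OF assms(1)]) (simp add: nonneg)
  also have "\<dots> \<longleftrightarrow> (\<exists>u\<in>V. mat_pow V M n v u > 0 \<and> M u w > 0)"
    using nonneg by (intro bex_cong refl) (simp add: order_less_le)
  finally show ?thesis .
qed

lemma funpow_mat_mult_vec:
  assumes "finite V" "v \<in> V"
  shows "(mat_mult_vec V M ^^ n) f v = (\<Sum>x\<in>V. mat_pow V M n v x * f x)"
proof (induction n arbitrary: f)
  case 0
  have "(\<Sum>x\<in>V. (if v = x then 1 else 0) * f x) = (\<Sum>x\<in>V. if v = x then f x else 0)"
    by (intro sum.cong) auto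
  then show ?case using assms by simp
next
  case (Suc n)
  have "(mat_mult_vec V M ^^ Suc n) f v = (\<Sum>x\<in>V. \<Sum>u\<in>V. mat_pow V M n v x * M x u * f u)"
    by (simp only: funpow_Suc_right comp_def Suc) (simp add: mat_mult_vec_def sum_distrib_left mult.assoc)
  also have "\<dots> = (\<Sum>u\<in>V. (\<Sum>x\<in>V. mat_pow V M n v x * M x u) * f u)"
    by (subst sum.swap) (simp add: sum_distrib_right)
  finally show ?case by simp
qed

lemma mat_pow_pos_imp_row_pos:
  assumes "finite V" "nonneg_mat V M" "v \<in> V"
  shows "w \<in> V \<Longrightarrow> mat_pow V M (Suc n) v w > 0 \<Longrightarrow> \<exists>u\<in>V. M v u > 0"
proof (induction n arbitrary: w)
  case 0
  then obtain u where "u \<in> V" "mat_pow V M 0 v u > 0" "M u w > 0"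
    using mat_pow_Suc_pos_iff[OF assms] by blast
  then show ?case using \<open>w \<in> V\<close> by (auto split: if_splits)
next
  case (Suc n)
  then show ?case using mat_pow_Suc_pos_iff[OF assms] by blast
qed

lemma irreducible_mat_row_pos:
  assumes "finite V" "nonneg_mat V M" "irreducible_mat V M" "v \<in> V"
  shows "\<exists>u\<in>V. M v u > 0"
proof -
  obtain n where "n \<ge> 1" "mat_pow V M n v v > 0"
    using assms(3,4) unfolding irreducible_mat_def by blast
  then show ?thesis
    using mat_pow_pos_imp_row_pos[OF assms(1,2,4,4), of "n - 1"] by simp
qed

lemma irreducible_mat_mult_pos_vec:
  assumes "finite V" "nonneg_mat V M" "irreducible_mat V M" "\<forall>w\<in>V. u w > 0" "v \<in> V"
  shows "mat_mult_vec V M u v > 0"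
proof -
  obtain w where "w \<in> V" "M v w > 0" using irreducible_mat_row_pos[OF assms(1-3,5)] by blast
  then show ?thesis
    using assms unfolding mat_mult_vec_def nonneg_mat_def
    by (intro sum_pos2[of _ w]) (auto intro: less_imp_le)
qed

lemma irreducible_mat_transfer:
  assumes "finite V" "nonneg_mat V M" "nonneg_mat V M'"
    and same_support: "\<forall>v\<in>V. \<forall>w\<in>V. M v w > 0 \<longleftrightarrow> M' v w > 0"
    and "irreducible_mat V M"
  shows "irreducible_mat V M'"
proof -
  have "mat_pow V M n v w > 0 \<longleftrightarrow> mat_pow V M' n v w > 0" if "v \<in> V" "w \<in> V" for n v w
    using that(2)
  proof (induction n arbitrary: w)
    case (Suc n)
    then show ?case
      using mat_pow_Suc_pos_iff[OF assms(1,2) that(1)] mat_pow_Suc_pos_iff[OF assms(1,3) that(1)]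
        same_support by auto
  qed simp
  then show ?thesis using assms(5) unfolding irreducible_mat_def by blast
qed

lemma irreducible_mat_vanishing:
  assumes fin: "finite V" and nn: "nonneg_mat V M" and irr: "irreducible_mat V M"
    and f_nonneg: "\<forall>v\<in>V. 0 \<le> f v"
    and f_zero: "\<forall>v\<in>V. f v = 0 \<longrightarrow> mat_mult_vec V M f v = 0"
    and v0: "v0 \<in> V" "f v0 = 0"
  shows "\<forall>x\<in>V. f x = 0"
proof -
  have edge: "f x = 0" if "v \<in> V" "f v = 0" "x \<in> V" "M v x > 0" for v x
  proof -
    have "(\<Sum>w\<in>V. M v w * f w) = 0" using f_zero that by (simp add: mat_mult_vec_def)
    then have "M v x * f x = 0"
      using sum_nonneg_eq_0_iff[OF fin, of "\<lambda>w. M v w * f w"] nn f_nonneg that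
      by (auto simp: nonneg_mat_def)
    then show ?thesis using that by simp
  qed
  have "f x = 0" if "x \<in> V" "mat_pow V M n v0 x > 0" for n x
    using that
  proof (induction n arbitrary: x)
    case (Suc n)
    then show ?case using mat_pow_Suc_pos_iff[OF fin nn v0(1)] edge by blast
  qed (use v0 in \<open>simp split: if_splits\<close>)
  then show ?thesis using irr v0(1) unfolding irreducible_mat_def by blast
qed

lemma irreducible_mat_eigenvector_unique:
  assumes fin: "finite V" and ne: "V \<noteq> {}" and nn: "nonneg_mat V M" and irr: "irreducible_mat V M"
    and u: "\<forall>v\<in>V. u v > 0" "\<forall>v\<in>V. mat_mult_vec V M u v = t * u v"
    and z: "\<forall>v\<in>V. mat_mult_vec V M z v = t * z v"
  shows "\<exists>c. \<forall>v\<in>V. z v = c * u v"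
proof -
  define c where "c = Min ((\<lambda>v. z v / u v) ` V)"
  have "c \<in> (\<lambda>v. z v / u v) ` V" unfolding c_def using fin ne by (intro Min_in) auto
  then obtain v0 where v0: "v0 \<in> V" "c = z v0 / u v0" by auto
  define w where "w = (\<lambda>v. z v - c * u v)"
  have "c \<le> z v / u v" if "v \<in> V" for v using fin that unfolding c_def by simp
  then have w_nonneg: "\<forall>v\<in>V. 0 \<le> w v"
    using u(1) by (auto simp: w_def pos_le_divide_eq)
  have "u v0 > 0" using u(1) v0(1) by blast
  then have "w v0 = 0" using v0(2) by (simp add: w_def)
  moreover have w_eigen: "mat_mult_vec V M w v = t * w v" if "v \<in> V" for v
  proof -
    have "mat_mult_vec V M w v = mat_mult_vec V M z v - c * mat_mult_vec V M u v"
      by (simp add: mat_mult_vec_def w_def right_diff_distrib sum_subtractf sum_distrib_left mult_ac)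
    then show ?thesis using u(2) z that by (simp add: w_def algebra_simps)
  qed
  ultimately have "\<forall>x\<in>V. w x = 0"
    by (intro irreducible_mat_vanishing[OF fin nn irr w_nonneg _ v0(1)]) (simp_all add: w_eigen)
  then show ?thesis by (auto simp: w_def)
qed

lemma finite_mat_eigenvalues:
  fixes M :: "'a \<Rightarrow> 'a \<Rightarrow> real"
  assumes fV: "finite V"
  shows "finite {c. mat_eigenvalue V M c}"
proof -
  obtain f where f: "bij_betw f {0..<card V} V" using ex_bij_betw_nat_finite[OF fV] by blast
  define n where "n = card V"
  define A where "A = mat n n (\<lambda>(i,j). complex_of_real (M (f i) (f j)))"
  have A: "A \<in> carrier_mat n n" by (simp add: A_def)
  have "{c. mat_eigenvalue V M c} \<subseteq> spectrum A"
  proof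
    fix c assume "c \<in> {c. mat_eigenvalue V M c}"
    then obtain z where z: "\<exists>v\<in>V. z v \<noteq> 0" "\<forall>v\<in>V. (\<Sum>w\<in>V. complex_of_real (M v w) * z w) = c * z v"
      unfolding mat_eigenvalue_def by blast
    define vz where "vz = vec n (\<lambda>i. z (f i))"
    have vzc: "vz \<in> carrier_vec n" by (simp add: vz_def)
    have nz: "vz \<noteq> 0\<^sub>v n"
    proof
      assume h: "vz = 0\<^sub>v n"
      obtain v where v: "v \<in> V" "z v \<noteq> 0" using z(1) by blast
      obtain i where i: "i < n" "f i = v" using f v(1) unfolding bij_betw_def n_def by (metis atLeastLessThan_iff imageE)
      have "vz $ i = 0" using h i by simp
      then show False using i v by (simp add: vz_def)
    qed
    have "A *\<^sub>v vz = c \<cdot>\<^sub>v vz"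
    proof (rule eq_vecI)
      show "dim_vec (A *\<^sub>v vz) = dim_vec (c \<cdot>\<^sub>v vz)" using A by (simp add: vz_def)
      fix i assume "i < dim_vec (c \<cdot>\<^sub>v vz)"
      then have i: "i < n" by (simp add: vz_def)
      have fi: "f i \<in> V" using f i unfolding bij_betw_def n_def by auto
      have "(A *\<^sub>v vz) $ i = (\<Sum>j = 0..<n. complex_of_real (M (f i) (f j)) * z (f j))"
        using i by (simp add: A_def vz_def scalar_prod_def)
      also have "\<dots> = (\<Sum>w\<in>V. complex_of_real (M (f i) w) * z w)"
        using sum.reindex_bij_betw[OF f[folded n_def], of "\<lambda>w. complex_of_real (M (f i) w) * z w"] by simp
      also have "\<dots> = c * z (f i)" using z(2) fi by blast
      finally show "(A *\<^sub>v vz) $ i = (c \<cdot>\<^sub>v vz) $ i" using i by (simp add: vz_def)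
    qed
    then have "eigenvector A vz c" unfolding eigenvector_def using vzc nz A by simp
    then show "c \<in> spectrum A" unfolding spectrum_def eigenvalue_def by blast
  qed
  then show ?thesis using card_finite_spectrum(1)[OF A] finite_subset by blast
qed

lemma mat_eigenvalue_norm_le:
  assumes fin: "finite V" and ne: "V \<noteq> {}" and nn: "nonneg_mat V M"
    and u: "\<forall>v\<in>V. u v > 0" "\<forall>v\<in>V. mat_mult_vec V M u v = t * u v"
    and c: "mat_eigenvalue V M c"
  shows "cmod c \<le> t"
proof -
  obtain z where z: "\<exists>v\<in>V. z v \<noteq> 0" "\<forall>v\<in>V. (\<Sum>w\<in>V. complex_of_real (M v w) * z w) = c * z v"
    using c unfolding mat_eigenvalue_def by blast
  define G where "G = Max ((\<lambda>v. cmod (z v) / u v) ` V)"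
  have "G \<in> (\<lambda>v. cmod (z v) / u v) ` V" unfolding G_def using fin ne by (intro Max_in) auto
  then obtain v0 where v0: "v0 \<in> V" "G = cmod (z v0) / u v0" by auto
  have G_ge: "cmod (z w) / u w \<le> G" if "w \<in> V" for w
    using fin that unfolding G_def by simp
  have z_le: "cmod (z w) \<le> G * u w" if "w \<in> V" for w
    using G_ge[OF that] u(1) that by (simp add: pos_divide_le_eq)
  obtain v2 where v2: "v2 \<in> V" "z v2 \<noteq> 0" using z(1) by blast
  have "0 < cmod (z v2) / u v2" using v2 u(1) by simp
  then have "G > 0" using G_ge[OF v2(1)] by linarith
  moreover have "u v0 > 0" using u(1) v0(1) by blast
  ultimately have z_v0: "cmod (z v0) = G * u v0" "cmod (z v0) > 0"
    using v0(2) by (simp_all add: zero_less_divide_iff)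
  have "cmod c * cmod (z v0) = cmod (\<Sum>w\<in>V. complex_of_real (M v0 w) * z w)"
    using z(2) v0(1) by (simp add: norm_mult)
  also have "\<dots> \<le> (\<Sum>w\<in>V. cmod (complex_of_real (M v0 w) * z w))"
    by (rule norm_sum)
  also have "\<dots> = (\<Sum>w\<in>V. M v0 w * cmod (z w))"
    using nn v0(1) by (intro sum.cong refl) (simp add: norm_mult nonneg_mat_def)
  also have "\<dots> \<le> (\<Sum>w\<in>V. M v0 w * (G * u w))"
    using nn v0(1) z_le by (intro sum_mono mult_left_mono) (auto simp: nonneg_mat_def)
  also have "\<dots> = G * mat_mult_vec V M u v0"
    by (simp add: mat_mult_vec_def sum_distrib_left mult_ac)
  also have "\<dots> = t * cmod (z v0)" using u(2) v0(1) z_v0(1) by simp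
  finally show ?thesis using z_v0(2) by simp
qed

lemma spectral_radius_mat_pos_eigenvector:
  assumes fin: "finite V" and ne: "V \<noteq> {}" and nn: "nonneg_mat V M"
    and u: "\<forall>v\<in>V. u v > 0" "\<forall>v\<in>V. mat_mult_vec V M u v = t * u v"
  shows "spectral_radius_mat V M = t"
proof -
  obtain v1 where v1: "v1 \<in> V" using ne by blast
  have "0 \<le> t * u v1"
    using mat_mult_vec_nonneg[OF nn, of u v1] u v1 by (simp add: less_imp_le)
  moreover have "u v1 > 0" using u(1) v1 by blast
  ultimately have t_nonneg: "t \<ge> 0" by (auto simp: zero_le_mult_iff)
  have t_eigenvalue: "mat_eigenvalue V M (complex_of_real t)"
    unfolding mat_eigenvalue_def
  proof (intro exI[of _ "\<lambda>v. complex_of_real (u v)"] conjI ballI)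
    show "\<exists>v\<in>V. complex_of_real (u v) \<noteq> 0" using v1 u(1) by force
    fix v assume "v \<in> V"
    have "(\<Sum>w\<in>V. complex_of_real (M v w) * complex_of_real (u w)) = complex_of_real (mat_mult_vec V M u v)"
      by (simp add: mat_mult_vec_def)
    then show "(\<Sum>w\<in>V. complex_of_real (M v w) * complex_of_real (u w)) = complex_of_real t * complex_of_real (u v)"
      using u(2) \<open>v \<in> V\<close> by simp
  qed
  have bound: "cmod c \<le> t" if "mat_eigenvalue V M c" for c
    using mat_eigenvalue_norm_le[OF fin ne nn u that] .
  have "finite {cmod c | c. mat_eigenvalue V M c}"
    using finite_mat_eigenvalues[OF fin, of M] by (simp add: setcompr_eq_image)
  then show ?thesis unfolding spectral_radius_mat_def
  proof (rule Max_eqI)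
    show "t \<in> {cmod c | c. mat_eigenvalue V M c}" using t_eigenvalue t_nonneg by force
  qed (use bound in blast)
qed

subsection \<open>Existence of a positive eigenvector\<close>

lemma finite_bounded_seq_convergent_subseq:
  fixes f :: "nat \<Rightarrow> 'a \<Rightarrow> real"
  assumes "finite V" and "\<forall>j. \<forall>v\<in>V. \<bar>f j v\<bar> \<le> B"
  shows "\<exists>h L. strict_mono h \<and> (\<forall>v\<in>V. (\<lambda>j. f (h j) v) \<longlonglongrightarrow> L v)"
  using assms
proof (induction V rule: finite_induct)
  case empty
  show ?case by (rule exI[of _ id]) (auto simp: strict_mono_def)
next
  case (insert a F)
  then obtain h L where h: "strict_mono h" "\<forall>v\<in>F. (\<lambda>j. f (h j) v) \<longlonglongrightarrow> L v" by auto
  obtain r where r: "strict_mono r" "monoseq (\<lambda>n. f (h (r n)) a)"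
    using seq_monosub[of "\<lambda>j. f (h j) a"] by blast
  have "Bseq (\<lambda>n. f (h (r n)) a)"
    using insert.prems by (intro BseqI'[where K = B]) simp
  then obtain l where l: "(\<lambda>n. f (h (r n)) a) \<longlonglongrightarrow> l"
    using Bseq_monoseq_convergent r(2) convergent_def by blast
  have "(\<lambda>j. f ((h \<circ> r) j) v) \<longlonglongrightarrow> (L(a := l)) v" if "v \<in> insert a F" for v
  proof (cases "v = a")
    case False
    then have "((\<lambda>j. f (h j) v) \<circ> r) \<longlonglongrightarrow> L v"
      using that h(2) LIMSEQ_subseq_LIMSEQ r(1) by blast
    then show ?thesis using False by (simp add: comp_def)
  qed (use l in simp)
  then show ?case using strict_mono_o[OF h(1) r(1)] by blast
qed

definition mat_pow_sum :: "'a set \<Rightarrow> ('a \<Rightarrow> 'a \<Rightarrow> real) \<Rightarrow> nat \<Rightarrow> ('a \<Rightarrow> real) \<Rightarrow> 'a \<Rightarrow> real" where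
  "mat_pow_sum V M J f = (\<lambda>v. \<Sum>j\<le>J. (mat_mult_vec V M ^^ j) f v)"

lemma mat_pow_sum_eq:
  "finite V \<Longrightarrow> v \<in> V \<Longrightarrow> mat_pow_sum V M J f v = (\<Sum>j\<le>J. \<Sum>x\<in>V. mat_pow V M j v x * f x)"
  unfolding mat_pow_sum_def by (simp add: funpow_mat_mult_vec)

lemma mat_pow_sum_diff:
  "finite V \<Longrightarrow> v \<in> V \<Longrightarrow>
    mat_pow_sum V M J (\<lambda>w. f w - c * g w) v = mat_pow_sum V M J f v - c * mat_pow_sum V M J g v"
  by (simp add: mat_pow_sum_eq right_diff_distrib sum_subtractf sum_distrib_left mult_ac)

lemma mat_mult_vec_mat_pow_sum:
  "mat_mult_vec V M (mat_pow_sum V M J f) v = mat_pow_sum V M J (mat_mult_vec V M f) v"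
proof -
  have "mat_mult_vec V M (mat_pow_sum V M J f) v = (\<Sum>j\<le>J. mat_mult_vec V M ((mat_mult_vec V M ^^ j) f) v)"
    by (simp add: mat_mult_vec_def mat_pow_sum_def sum_distrib_left sum.swap[of _ V])
  then show ?thesis by (simp add: mat_pow_sum_def funpow_swap1)
qed

text \<open>For an irreducible matrix, \<open>I + M + \<dots> + M\<^sup>J\<close> is strictly positive once \<open>J\<close> bounds the
  length of a shortest path between any two indices.\<close>

lemma irreducible_mat_pow_sum_pos:
  assumes fin: "finite V" and nn: "nonneg_mat V M" and irr: "irreducible_mat V M"
  shows "\<exists>J. \<forall>f x0. (\<forall>w\<in>V. 0 \<le> f w) \<longrightarrow> x0 \<in> V \<longrightarrow> f x0 > 0 \<longrightarrow> (\<forall>v\<in>V. mat_pow_sum V M J f v > 0)"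
proof -
  have "\<forall>p\<in>V \<times> V. \<exists>n. mat_pow V M n (fst p) (snd p) > 0"
    using irr unfolding irreducible_mat_def by auto
  then obtain len where len: "\<forall>p\<in>V \<times> V. mat_pow V M (len p) (fst p) (snd p) > 0"
    by (rule bchoice[THEN exE])
  define J where "J = Max (len ` (V \<times> V))"
  have pos: "mat_pow_sum V M J f v > 0"
    if f: "\<forall>w\<in>V. 0 \<le> f w" and x0: "x0 \<in> V" "f x0 > 0" and v: "v \<in> V" for f x0 v
  proof -
    let ?g = "\<lambda>j. \<Sum>x\<in>V. mat_pow V M j v x * f x"
    have g_nonneg: "0 \<le> ?g j" for j
      using f mat_pow_nonneg[OF nn v] by (intro sum_nonneg mult_nonneg_nonneg) auto
    have "0 < mat_pow V M (len (v, x0)) v x0 * f x0"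
      using bspec[OF len, of "(v, x0)"] v x0 by simp
    also have "\<dots> \<le> ?g (len (v, x0))"
      using fin x0 f mat_pow_nonneg[OF nn v]
      by (intro member_le_sum[of x0 V "\<lambda>x. mat_pow V M (len (v, x0)) v x * f x"]) auto
    also have "\<dots> \<le> (\<Sum>j\<le>J. ?g j)"
    proof (rule member_le_sum)
      show "len (v, x0) \<in> {..J}" unfolding J_def using fin v x0 by (simp add: Max_ge)
    qed (use g_nonneg in simp_all)
    finally show ?thesis using mat_pow_sum_eq[OF fin v] by simp
  qed
  then show ?thesis by blast
qed

lemma collatz_wielandt_normalise:
  assumes fin: "finite V" and x: "\<forall>v\<in>V. 0 \<le> x v" "0 < (\<Sum>v\<in>V. x v)"
    and t: "\<forall>v\<in>V. t * x v \<le> mat_mult_vec V M x v"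
  defines "x' \<equiv> (\<lambda>v. x v / (\<Sum>w\<in>V. x w))"
  shows "prob_vec V x'" "\<forall>v\<in>V. t * x' v \<le> mat_mult_vec V M x' v"
proof -
  show "prob_vec V x'"
    using x by (auto simp: prob_vec_def x'_def simp flip: sum_divide_distrib)
  have "mat_mult_vec V M x' v = mat_mult_vec V M x v / (\<Sum>w\<in>V. x w)" for v
    by (simp add: mat_mult_vec_def x'_def sum_divide_distrib)
  then show "\<forall>v\<in>V. t * x' v \<le> mat_mult_vec V M x' v"
    using t x(2) by (auto simp: x'_def intro: divide_right_mono)
qed

lemma collatz_wielandt_limit:
  assumes fin: "finite V" and x: "\<And>j. prob_vec V (x j)" and t: "t \<longlonglongrightarrow> \<rho>"
    and lim: "\<forall>v\<in>V. (\<lambda>j. x j v) \<longlonglongrightarrow> L v"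
    and sub: "\<And>j. \<forall>v\<in>V. t j * x j v \<le> mat_mult_vec V M (x j) v"
  shows "prob_vec V L" "\<forall>v\<in>V. \<rho> * L v \<le> mat_mult_vec V M L v"
proof -
  have "0 \<le> L v" if "v \<in> V" for v
    using lim x that by (intro LIMSEQ_le_const[of "\<lambda>j. x j v"]) (auto simp: prob_vec_def)
  moreover have "(\<lambda>j. \<Sum>v\<in>V. x j v) \<longlonglongrightarrow> (\<Sum>v\<in>V. L v)" using lim by (intro tendsto_sum) auto
  then have "(\<Sum>v\<in>V. L v) = 1"
    using x LIMSEQ_unique[OF _ tendsto_const] by (simp add: prob_vec_def)
  ultimately show "prob_vec V L" by (simp add: prob_vec_def)
  show "\<forall>v\<in>V. \<rho> * L v \<le> mat_mult_vec V M L v"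
  proof
    fix v assume "v \<in> V"
    have "(\<lambda>j. mat_mult_vec V M (x j) v - t j * x j v) \<longlonglongrightarrow> mat_mult_vec V M L v - \<rho> * L v"
      unfolding mat_mult_vec_def using lim t \<open>v \<in> V\<close> by (intro tendsto_intros) auto
    then have "0 \<le> mat_mult_vec V M L v - \<rho> * L v"
      using sub \<open>v \<in> V\<close> by (intro LIMSEQ_le_const) auto
    then show "\<rho> * L v \<le> mat_mult_vec V M L v" by simp
  qed
qed

lemma collatz_wielandt_bound:
  assumes fin: "finite V" and nn: "nonneg_mat V M" and x: "prob_vec V x"
    and t: "\<forall>v\<in>V. t * x v \<le> mat_mult_vec V M x v"
  shows "t \<le> (\<Sum>v\<in>V. \<Sum>w\<in>V. M v w)"
proof -
  have ne: "V \<noteq> {}" using x by (auto simp: prob_vec_def)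
  have "Max (x ` V) \<in> x ` V" using fin ne by (intro Max_in) auto
  then obtain v0 where v0: "v0 \<in> V" "x v0 = Max (x ` V)" by auto
  have x_le: "x w \<le> x v0" if "w \<in> V" for w using v0 fin that by auto
  have "0 < (\<Sum>v\<in>V. x v)" using x by (simp add: prob_vec_def)
  also have "\<dots> \<le> (\<Sum>v\<in>V. x v0)" using x_le by (intro sum_mono) auto
  finally have x_v0_pos: "x v0 > 0" by (simp add: zero_less_mult_iff)
  have "t * x v0 \<le> (\<Sum>w\<in>V. M v0 w * x w)" using t v0(1) by (simp add: mat_mult_vec_def)
  also have "\<dots> \<le> (\<Sum>w\<in>V. M v0 w) * x v0"
    using nn v0(1) x_le by (auto simp: nonneg_mat_def sum_distrib_right intro!: sum_mono mult_left_mono)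
  also have "(\<Sum>w\<in>V. M v0 w) \<le> (\<Sum>v\<in>V. \<Sum>w\<in>V. M v w)"
    using fin v0(1) nn
    by (intro member_le_sum[of v0 V "\<lambda>v. \<Sum>w\<in>V. M v w"]) (auto simp: nonneg_mat_def intro!: sum_nonneg)
  finally show ?thesis using x_v0_pos by (simp add: mult_le_cancel_right)
qed

lemma collatz_wielandt_max:
  assumes fin: "finite V" and ne: "V \<noteq> {}" and nn: "nonneg_mat V M"
  shows "\<exists>L \<rho>. prob_vec V L \<and> (\<forall>v\<in>V. \<rho> * L v \<le> mat_mult_vec V M L v) \<and>
      (\<forall>t x. prob_vec V x \<longrightarrow> (\<forall>v\<in>V. t * x v \<le> mat_mult_vec V M x v) \<longrightarrow> t \<le> \<rho>)"
proof -
  define T where "T = {t. \<exists>x. prob_vec V x \<and> (\<forall>v\<in>V. t * x v \<le> mat_mult_vec V M x v)}"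
  define \<rho> where "\<rho> = Sup T"
  have uniform: "prob_vec V (\<lambda>_. 1 / real (card V))"
    using fin ne by (simp add: prob_vec_def card_gt_0_iff)
  then have "\<forall>v\<in>V. 0 * (1 / real (card V)) \<le> mat_mult_vec V M (\<lambda>_. 1 / real (card V)) v"
    using mat_mult_vec_nonneg[OF nn] by (simp add: prob_vec_def)
  then have "0 \<in> T" using uniform unfolding T_def by blast
  have bdd: "bdd_above T"
    using collatz_wielandt_bound[OF fin nn] unfolding T_def by (auto simp: bdd_above_def)
  have "\<exists>x. prob_vec V x \<and> (\<forall>v\<in>V. (\<rho> - inverse (real (Suc j))) * x v \<le> mat_mult_vec V M x v)" for j
  proof -
    have "\<rho> - inverse (real (Suc j)) < Sup T" unfolding \<rho>_def by simp
    then obtain t x where t: "\<rho> - inverse (real (Suc j)) < t" and x: "prob_vec V x"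
      and tx: "\<forall>v\<in>V. t * x v \<le> mat_mult_vec V M x v"
      using less_cSupD[of T] \<open>0 \<in> T\<close> unfolding T_def by blast
    have "(\<rho> - inverse (real (Suc j))) * x v \<le> mat_mult_vec V M x v" if "v \<in> V" for v
      using mult_right_mono[OF less_imp_le[OF t], of "x v"] tx x that by (force simp: prob_vec_def)
    then show ?thesis using x by blast
  qed
  then obtain xx where xx: "\<And>j. prob_vec V (xx j)"
    "\<And>j. \<forall>v\<in>V. (\<rho> - inverse (real (Suc j))) * xx j v \<le> mat_mult_vec V M (xx j) v"
    by metis
  have "\<bar>xx j v\<bar> \<le> 1" if "v \<in> V" for j v
    using xx(1)[of j] member_le_sum[OF that, of "xx j"] fin that by (auto simp: prob_vec_def)
  then obtain h L where h: "strict_mono h" "\<forall>v\<in>V. (\<lambda>j. xx (h j) v) \<longlonglongrightarrow> L v"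
    using finite_bounded_seq_convergent_subseq[OF fin, of xx 1] by blast
  have "(\<lambda>j. \<rho> - inverse (real (Suc (h j)))) \<longlonglongrightarrow> \<rho> - 0"
    using LIMSEQ_subseq_LIMSEQ[OF LIMSEQ_inverse_real_of_nat h(1)] by (intro tendsto_intros) (simp add: comp_def)
  then have L: "prob_vec V L" "\<forall>v\<in>V. \<rho> * L v \<le> mat_mult_vec V M L v"
    using collatz_wielandt_limit[of V "\<lambda>j. xx (h j)", OF fin xx(1) _ h(2) xx(2)] by simp_all
  moreover have "t \<le> \<rho>" if "prob_vec V x" "\<forall>v\<in>V. t * x v \<le> mat_mult_vec V M x v" for t x
    using that bdd unfolding \<rho>_def T_def by (intro cSup_upper) auto
  ultimately show ?thesis using L by blast
qed

text \<open>If the Collatz--Wielandt maximum were not attained with equality, applying the strictly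
  positive matrix \<open>I + M + \<dots> + M\<^sup>J\<close> would produce a vector with a larger ratio.\<close>

lemma collatz_wielandt_max_eigenvector:
  assumes fin: "finite V" and ne: "V \<noteq> {}" and nn: "nonneg_mat V M" and irr: "irreducible_mat V M"
    and L: "prob_vec V L" "\<forall>v\<in>V. \<rho> * L v \<le> mat_mult_vec V M L v"
    and max: "\<forall>t x. prob_vec V x \<longrightarrow> (\<forall>v\<in>V. t * x v \<le> mat_mult_vec V M x v) \<longrightarrow> t \<le> \<rho>"
  shows "\<forall>v\<in>V. mat_mult_vec V M L v = \<rho> * L v"
proof (rule ccontr)
  assume "\<not> ?thesis"
  then obtain v0 where v0: "v0 \<in> V" "\<rho> * L v0 < mat_mult_vec V M L v0" using L(2) by force
  define w where "w = (\<lambda>v. mat_mult_vec V M L v - \<rho> * L v)"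
  have w_nonneg: "\<forall>v\<in>V. 0 \<le> w v" using L(2) by (simp add: w_def)
  have "w v0 > 0" using v0 by (simp add: w_def)
  have L_nonneg: "\<forall>v\<in>V. 0 \<le> L v" using L(1) by (simp add: prob_vec_def)
  obtain x0 where x0: "x0 \<in> V" "L x0 > 0"
    using sum_nonneg_pos_iff[OF fin L_nonneg] L(1) by (auto simp: prob_vec_def)
  obtain J where J: "\<forall>f x0. (\<forall>w\<in>V. 0 \<le> f w) \<longrightarrow> x0 \<in> V \<longrightarrow> f x0 > 0 \<longrightarrow> (\<forall>v\<in>V. mat_pow_sum V M J f v > 0)"
    using irreducible_mat_pow_sum_pos[OF fin nn irr] by blast
  define z where "z = mat_pow_sum V M J L"
  have z_pos: "\<forall>v\<in>V. z v > 0" using J L_nonneg x0 by (simp add: z_def)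
  have w_pos: "\<forall>v\<in>V. mat_pow_sum V M J w v > 0" using J w_nonneg v0(1) \<open>w v0 > 0\<close> by blast
  have z_excess: "mat_mult_vec V M z v - \<rho> * z v = mat_pow_sum V M J w v" if "v \<in> V" for v
    unfolding z_def mat_mult_vec_mat_pow_sum w_def using mat_pow_sum_diff[OF fin that] by simp
  define \<epsilon> where "\<epsilon> = Min ((\<lambda>v. mat_pow_sum V M J w v / z v) ` V)"
  have "\<epsilon> > 0" unfolding \<epsilon>_def using fin ne w_pos z_pos by (subst Min_gr_iff) auto
  have z_larger: "(\<rho> + \<epsilon>) * z v \<le> mat_mult_vec V M z v" if "v \<in> V" for v
  proof -
    have "\<epsilon> \<le> mat_pow_sum V M J w v / z v" unfolding \<epsilon>_def using fin that by simp
    then have "\<epsilon> * z v \<le> mat_pow_sum V M J w v" using z_pos that by (simp add: pos_le_divide_eq)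
    then show ?thesis using z_excess[OF that] by (simp add: distrib_right)
  qed
  have "0 < (\<Sum>v\<in>V. z v)" using fin ne z_pos by (intro sum_pos) auto
  then have "\<rho> + \<epsilon> \<le> \<rho>"
    using collatz_wielandt_normalise[OF fin _ _ ballI[OF z_larger]] z_pos max by (meson less_imp_le)
  then show False using \<open>\<epsilon> > 0\<close> by simp
qed

theorem perron_frobenius_eigenvector:
  assumes fin: "finite V" and ne: "V \<noteq> {}" and nn: "nonneg_mat V M" and irr: "irreducible_mat V M"
  shows "\<exists>u \<rho>. \<rho> > 0 \<and> (\<forall>v\<in>V. u v > 0) \<and> (\<forall>v\<in>V. mat_mult_vec V M u v = \<rho> * u v)"
proof -
  obtain L \<rho> where L: "prob_vec V L" "\<forall>v\<in>V. \<rho> * L v \<le> mat_mult_vec V M L v"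
    and max: "\<forall>t x. prob_vec V x \<longrightarrow> (\<forall>v\<in>V. t * x v \<le> mat_mult_vec V M x v) \<longrightarrow> t \<le> \<rho>"
    using collatz_wielandt_max[OF fin ne nn] by blast
  have eigen: "\<forall>v\<in>V. mat_mult_vec V M L v = \<rho> * L v"
    using collatz_wielandt_max_eigenvector[OF fin ne nn irr L max] .
  have L_nonneg: "\<forall>v\<in>V. 0 \<le> L v" using L(1) by (simp add: prob_vec_def)
  have L_pos: "\<forall>v\<in>V. L v > 0"
  proof (rule ccontr)
    assume "\<not> ?thesis"
    then obtain v0 where "v0 \<in> V" "L v0 = 0" using L_nonneg by force
    then have "\<forall>x\<in>V. L x = 0"
      by (intro irreducible_mat_vanishing[OF fin nn irr L_nonneg]) (simp_all add: eigen)
    then show False using L(1) by (simp add: prob_vec_def)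
  qed
  obtain v where "v \<in> V" using ne by blast
  then have "0 < \<rho> * L v"
    using irreducible_mat_mult_pos_vec[OF fin nn irr L_pos] eigen by simp
  moreover have "L v > 0" using L_pos \<open>v \<in> V\<close> by blast
  ultimately have "\<rho> > 0" by (simp add: zero_less_mult_iff)
  then show ?thesis using L_pos eigen by blast
qed

section \<open>Factorisation in \<open>k\<close>-graphs\<close>

lemma zero_in_Nk [simp]: "(\<lambda>_. 0) \<in> Nk k"
  by (simp add: Nk_def)

lemma unitvec_in_Nk: "i < k \<Longrightarrow> unitvec i \<in> Nk k"
  by (auto simp: unitvec_def Nk_def)

lemma Nk_add: "a \<in> Nk k \<Longrightarrow> b \<in> Nk k \<Longrightarrow> (\<lambda>i. a i + b i) \<in> Nk k"
  by (auto simp: Nk_def)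

lemma Nk_diff: "a \<in> Nk k \<Longrightarrow> (\<lambda>i. a i - b i) \<in> Nk k"
  by (auto simp: Nk_def)

lemma Nk_le: "a \<in> Nk k \<Longrightarrow> b \<le> a \<Longrightarrow> b \<in> Nk k"
  by (auto simp: Nk_def le_fun_def) (metis le_zero_eq)

lemma Nk_induct [consumes 1, case_names zero unitvec]:
  assumes "p \<in> Nk k"
    and "P (\<lambda>_. 0)"
    and "\<And>p i. p \<in> Nk k \<Longrightarrow> i < k \<Longrightarrow> P p \<Longrightarrow> P (\<lambda>j. p j + unitvec i j)"
  shows "P p"
  using assms(1)
proof (induction "\<Sum>i<k. p i" arbitrary: p)
  case 0
  have "p = (\<lambda>_. 0)"
  proof
    fix i show "p i = 0" using 0 by (cases "i < k") (auto simp: Nk_def)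
  qed
  then show ?case using assms(2) by simp
next
  case (Suc n)
  have "\<exists>i<k. p i \<noteq> 0"
  proof (rule ccontr)
    assume "\<not> (\<exists>i<k. p i \<noteq> 0)"
    then have "(\<Sum>i<k. p i) = 0" by simp
    with Suc.hyps(2) show False by simp
  qed
  then obtain i where i: "i < k" "p i > 0" by blast
  define p' where "p' = p(i := p i - 1)"
  have p': "p' \<in> Nk k" using Suc.prems i by (auto simp: Nk_def p'_def)
  have p_eq: "p = (\<lambda>j. p' j + unitvec i j)" using i by (auto simp: p'_def unitvec_def fun_eq_iff)
  have "(\<Sum>j<k. p j) = (\<Sum>j<k. p' j) + (\<Sum>j<k. unitvec i j)"
    by (subst p_eq) (simp add: sum.distrib)
  then have "n = (\<Sum>j<k. p' j)" using Suc.hyps(2) i by (simp add: unitvec_def)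
  then show ?case using Suc.hyps(1)[OF _ p'] assms(3)[OF p' i(1)] p_eq by simp
qed

locale k_graph =
  fixes k :: nat and Mor :: "'a set" and r s :: "'a \<Rightarrow> 'a" and cmp :: "'a \<Rightarrow> 'a \<Rightarrow> 'a"
    and d :: "'a \<Rightarrow> nat \<Rightarrow> nat"
  assumes kgraph: "kgraph k Mor r s cmp d"
begin

lemma range_in_Mor: "l \<in> Mor \<Longrightarrow> r l \<in> Mor"
  and source_in_Mor: "l \<in> Mor \<Longrightarrow> s l \<in> Mor"
  and degree_range: "l \<in> Mor \<Longrightarrow> d (r l) = (\<lambda>_. 0)"
  and degree_source: "l \<in> Mor \<Longrightarrow> d (s l) = (\<lambda>_. 0)"
  and vertex_range_source: "v \<in> Mor \<Longrightarrow> d v = (\<lambda>_. 0) \<Longrightarrow> r v = v \<and> s v = v"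
  and cmp_range_left: "l \<in> Mor \<Longrightarrow> cmp (r l) l = l"
  and cmp_source_right: "l \<in> Mor \<Longrightarrow> cmp l (s l) = l"
  and degree_in_Nk: "l \<in> Mor \<Longrightarrow> d l \<in> Nk k"
  using kgraph unfolding kgraph_def by auto

lemma
  assumes "a \<in> Mor" "b \<in> Mor" "s a = r b"
  shows cmp_in_Mor: "cmp a b \<in> Mor"
    and range_cmp: "r (cmp a b) = r a"
    and source_cmp: "s (cmp a b) = s b"
    and degree_cmp: "d (cmp a b) = (\<lambda>i. d a i + d b i)"
  using kgraph assms unfolding kgraph_def by auto

lemma cmp_assoc:
  "a \<in> Mor \<Longrightarrow> b \<in> Mor \<Longrightarrow> c \<in> Mor \<Longrightarrow> s a = r b \<Longrightarrow> s b = r c \<Longrightarrow>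
    cmp (cmp a b) c = cmp a (cmp b c)"
  using kgraph unfolding kgraph_def by blast

lemma unique_factorisation:
  "l \<in> Mor \<Longrightarrow> m \<in> Nk k \<Longrightarrow> n \<in> Nk k \<Longrightarrow> d l = (\<lambda>i. m i + n i) \<Longrightarrow>
    \<exists>!p. fst p \<in> Mor \<and> snd p \<in> Mor \<and> s (fst p) = r (snd p) \<and>
         l = cmp (fst p) (snd p) \<and> d (fst p) = m \<and> d (snd p) = n"
  using kgraph unfolding kgraph_def by blast

definition factor :: "'a \<Rightarrow> (nat \<Rightarrow> nat) \<Rightarrow> 'a \<times> 'a" where
  "factor l m = (THE p. fst p \<in> Mor \<and> snd p \<in> Mor \<and> s (fst p) = r (snd p) \<and>
     l = cmp (fst p) (snd p) \<and> d (fst p) = m \<and> d (snd p) = (\<lambda>i. d l i - m i))"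

definition head :: "'a \<Rightarrow> (nat \<Rightarrow> nat) \<Rightarrow> 'a" where
  "head l m = fst (factor l m)"

definition tail :: "'a \<Rightarrow> (nat \<Rightarrow> nat) \<Rightarrow> 'a" where
  "tail l m = snd (factor l m)"

lemma factorisation:
  assumes "l \<in> Mor" "m \<le> d l"
  shows "head l m \<in> Mor" "tail l m \<in> Mor" "s (head l m) = r (tail l m)"
    "l = cmp (head l m) (tail l m)" "d (head l m) = m" "d (tail l m) = (\<lambda>i. d l i - m i)"
proof -
  have "m \<in> Nk k" using Nk_le[OF degree_in_Nk[OF assms(1)] assms(2)] .
  moreover have "d l = (\<lambda>i. m i + (d l i - m i))" using assms(2) by (auto simp: le_fun_def)
  ultimately have "\<exists>!p. fst p \<in> Mor \<and> snd p \<in> Mor \<and> s (fst p) = r (snd p) \<and>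
      l = cmp (fst p) (snd p) \<and> d (fst p) = m \<and> d (snd p) = (\<lambda>i. d l i - m i)"
    using unique_factorisation[OF assms(1)] Nk_diff[OF degree_in_Nk[OF assms(1)]] by blast
  from theI'[OF this] show "head l m \<in> Mor" "tail l m \<in> Mor" "s (head l m) = r (tail l m)"
    "l = cmp (head l m) (tail l m)" "d (head l m) = m" "d (tail l m) = (\<lambda>i. d l i - m i)"
    unfolding head_def tail_def factor_def by blast+
qed

lemma range_head: "l \<in> Mor \<Longrightarrow> m \<le> d l \<Longrightarrow> r (head l m) = r l"
  using range_cmp[OF factorisation(1-3)] by (simp add: factorisation(4)[symmetric])

lemma source_tail: "l \<in> Mor \<Longrightarrow> m \<le> d l \<Longrightarrow> s (tail l m) = s l"
  using source_cmp[OF factorisation(1-3)] by (simp add: factorisation(4)[symmetric])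

lemma factor_cmp:
  assumes "a \<in> Mor" "b \<in> Mor" "s a = r b" "l = cmp a b" "m = d a"
  shows "head l m = a" "tail l m = b"
proof -
  have l: "l \<in> Mor" and dl: "d l = (\<lambda>i. d a i + d b i)"
    using assms cmp_in_Mor degree_cmp by auto
  have "(\<lambda>i. d l i - d a i) = d b" using dl by auto
  moreover have "\<exists>!p. fst p \<in> Mor \<and> snd p \<in> Mor \<and> s (fst p) = r (snd p) \<and>
      l = cmp (fst p) (snd p) \<and> d (fst p) = d a \<and> d (snd p) = d b"
    using unique_factorisation[OF l degree_in_Nk[OF assms(1)] degree_in_Nk[OF assms(2)] dl] .
  ultimately have "factor l (d a) = (a, b)"
    unfolding factor_def by (intro the1_equality) (use assms in auto)
  then show "head l m = a" "tail l m = b" using assms(5) by (simp_all add: head_def tail_def)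
qed

lemma factor_zero:
  assumes "l \<in> Mor"
  shows "head l (\<lambda>_. 0) = r l" "tail l (\<lambda>_. 0) = l"
proof -
  have "s (r l) = r l"
    using vertex_range_source[OF range_in_Mor degree_range] assms by blast
  then show "head l (\<lambda>_. 0) = r l" "tail l (\<lambda>_. 0) = l"
    using factor_cmp[OF range_in_Mor[OF assms] assms _ cmp_range_left[OF assms, symmetric]
        degree_range[OF assms, symmetric]] by simp_all
qed

lemma head_full:
  assumes "l \<in> Mor"
  shows "head l (d l) = l"
proof -
  have "r (s l) = s l"
    using vertex_range_source[OF source_in_Mor degree_source] assms by blast
  then show ?thesis
    using factor_cmp(1)[OF assms source_in_Mor[OF assms] _ cmp_source_right[OF assms, symmetric]]
    by simp
qed

lemma factor_cmp_prefix:
  assumes a: "a \<in> Mor" and b: "b \<in> Mor" and ab: "s a = r b" and c: "c \<le> d a"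
  shows "head (cmp a b) c = head a c" "tail (cmp a b) c = cmp (tail a c) b"
proof -
  note F = factorisation[OF a c]
  have s_tail: "s (tail a c) = r b" using source_tail[OF a c] ab by simp
  have eq: "cmp a b = cmp (head a c) (cmp (tail a c) b)"
    using cmp_assoc[OF F(1,2) b F(3) s_tail] F(4)[symmetric] by simp
  have "cmp (tail a c) b \<in> Mor" "s (head a c) = r (cmp (tail a c) b)"
    using cmp_in_Mor[OF F(2) b s_tail] range_cmp[OF F(2) b s_tail] F(3) by simp_all
  from factor_cmp[OF F(1) this eq F(5)[symmetric]]
  show "head (cmp a b) c = head a c" "tail (cmp a b) c = cmp (tail a c) b" by simp_all
qed

lemma factor_add:
  assumes t: "t \<in> Mor" and ce: "(\<lambda>i. c i + e i) \<le> d t"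
  shows "head t (\<lambda>i. c i + e i) = cmp (head t c) (head (tail t c) e)"
    "tail t (\<lambda>i. c i + e i) = tail (tail t c) e"
proof -
  have c: "c \<le> d t" using ce by (auto simp: le_fun_def) (metis add_leE)
  note F = factorisation[OF t c]
  have e: "e \<le> d (tail t c)"
    using ce F(6) by (auto simp: le_fun_def) (metis add_diff_cancel_left' diff_le_mono)
  note G = factorisation[OF F(2) e]
  have rr: "s (head t c) = r (head (tail t c) e)" using range_head[OF F(2) e] F(3) by simp
  have ss: "s (head (tail t c) e) = r (tail (tail t c) e)" using G(3) .
  have eq: "t = cmp (cmp (head t c) (head (tail t c) e)) (tail (tail t c) e)"
    using cmp_assoc[OF F(1) G(1,2) rr ss] F(4)[symmetric] G(4)[symmetric] by simp
  have "cmp (head t c) (head (tail t c) e) \<in> Mor"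
    and "s (cmp (head t c) (head (tail t c) e)) = r (tail (tail t c) e)"
    and "(\<lambda>i. c i + e i) = d (cmp (head t c) (head (tail t c) e))"
    using cmp_in_Mor[OF F(1) G(1) rr] degree_cmp[OF F(1) G(1) rr] source_cmp[OF F(1) G(1) rr]
      F(5) G(5) ss by simp_all
  from factor_cmp[OF this(1) G(2) this(2) eq this(3)]
  show "head t (\<lambda>i. c i + e i) = cmp (head t c) (head (tail t c) e)"
    "tail t (\<lambda>i. c i + e i) = tail (tail t c) e" by simp_all
qed

definition seg :: "'a \<Rightarrow> (nat \<Rightarrow> nat) \<Rightarrow> (nat \<Rightarrow> nat) \<Rightarrow> 'a" where
  "seg l a b = head (tail l a) (\<lambda>i. b i - a i)"

lemma seg_props:
  assumes l: "l \<in> Mor" and ab: "a \<le> b" and bp: "b \<le> p" and pl: "p \<le> d l"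
  shows "seg l a b \<in> Mor" "d (seg l a b) = (\<lambda>i. b i - a i)"
    "s (seg l a b) = r (seg l b p)" "seg l a p = cmp (seg l a b) (seg l b p)"
proof -
  have a: "a \<le> d l" using ab bp pl order_trans by blast
  note F = factorisation[OF l a]
  let ?t = "tail l a"
  have b1: "(\<lambda>i. b i - a i) \<le> d ?t"
    using F(6) bp pl ab by (auto simp: le_fun_def intro: diff_le_mono order_trans)
  have b2: "(\<lambda>i. (b i - a i) + (p i - b i)) \<le> d ?t" using F(6) bp pl ab
    by (auto simp: le_fun_def) (metis diff_le_mono le_add_diff_inverse le_trans)
  have e1: "(\<lambda>i. (b i - a i) + (p i - b i)) = (\<lambda>i. p i - a i)"
    using ab bp by (auto simp: le_fun_def fun_eq_iff)
  have e2: "(\<lambda>i. a i + (b i - a i)) = b" using ab by (auto simp: le_fun_def fun_eq_iff)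
  have "(\<lambda>i. a i + (b i - a i)) \<le> d l" unfolding e2 using bp pl by (rule order_trans)
  from factor_add(2)[OF l this] have tail_b: "tail l b = tail ?t (\<lambda>i. b i - a i)"
    unfolding e2 .
  note G = factorisation[OF F(2) b1]
  have pp: "(\<lambda>i. p i - b i) \<le> d (tail ?t (\<lambda>i. b i - a i))"
    using G(6) F(6) bp pl ab by (auto simp: le_fun_def intro: diff_le_mono)
  show "seg l a b \<in> Mor" "d (seg l a b) = (\<lambda>i. b i - a i)" using G(1,5) by (simp_all add: seg_def)
  show "s (seg l a b) = r (seg l b p)"
    using G(3) range_head[OF G(2) pp] unfolding seg_def tail_b by simp
  show "seg l a p = cmp (seg l a b) (seg l b p)"
    unfolding seg_def tail_b using factor_add(1)[OF F(2) b2] e1 by simp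
qed

lemma seg_cmp:
  assumes l: "l \<in> Mor" and \<alpha>: "\<alpha> \<in> Mor" "s l = r \<alpha>" and xy: "x \<le> y" "y \<le> d l"
  shows "seg (cmp l \<alpha>) x y = seg l x y"
proof -
  have x: "x \<le> d l" using xy order_trans by blast
  have "(\<lambda>i. y i - x i) \<le> d (tail l x)"
    using factorisation(6)[OF l x] xy by (auto simp: le_fun_def intro: diff_le_mono)
  moreover have "s (tail l x) = r \<alpha>" using source_tail[OF l x] \<alpha>(2) by simp
  ultimately show ?thesis
    unfolding seg_def factor_cmp_prefix(2)[OF l \<alpha> x]
    using factor_cmp_prefix(1) factorisation(2)[OF l x] \<alpha>(1) by auto
qed

lemma seg_zero_zero: "l \<in> Mor \<Longrightarrow> seg l (\<lambda>_. 0) (\<lambda>_. 0) = r l"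
  unfolding seg_def by (simp add: factor_zero)

lemma seg_zero_degree: "l \<in> Mor \<Longrightarrow> seg l (\<lambda>_. 0) (d l) = l"
  unfolding seg_def by (simp add: factor_zero head_full)

lemma seg_to_degree: "l \<in> Mor \<Longrightarrow> m \<le> d l \<Longrightarrow> seg l m (d l) = tail l m"
  unfolding seg_def using head_full[OF factorisation(2)] factorisation(6) by simp

section \<open>Infinite paths and periods\<close>

lemma inf_path:
  assumes "x \<in> inf_paths k Mor r s cmp d" "m \<in> Nk k" "n \<in> Nk k" "p \<in> Nk k" "m \<le> n" "n \<le> p"
  shows "x m n \<in> Mor" "d (x m n) = (\<lambda>i. n i - m i)" "s (x m n) = r (x n p)"
    "x m p = cmp (x m n) (x n p)"
  using assms unfolding inf_paths_def by blast+

lemma inf_path_eq_seg: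
  assumes x: "x \<in> inf_paths k Mor r s cmp d" and Nk: "m \<in> Nk k" "n \<in> Nk k" "p \<in> Nk k"
    and le: "m \<le> n" "n \<le> p"
  shows "x m n = seg (x (\<lambda>_. 0) p) m n"
proof -
  have m0: "(\<lambda>_. 0) \<le> m" by (simp add: le_fun_def)
  note X0 = inf_path[OF x zero_in_Nk Nk(1) Nk(3) m0 order.trans[OF le]]
  note X1 = inf_path[OF x Nk le]
  have "tail (x (\<lambda>_. 0) p) m = x m p"
    using factor_cmp(2)[OF X0(1) _ X0(3,4)] inf_path(1)[OF x Nk(1,3,3) order.trans[OF le] order.refl]
      X0(2) by simp
  moreover have "head (x m p) (\<lambda>i. n i - m i) = x m n"
    using factor_cmp(1)[OF X1(1) _ X1(3,4)] inf_path(1)[OF x Nk(2,3,3) le(2) order.refl] X1(2) by simp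
  ultimately show ?thesis by (simp add: seg_def)
qed

definition no_sources :: bool where
  "no_sources \<longleftrightarrow> (\<forall>w\<in>Mor. d w = (\<lambda>_. 0) \<longrightarrow> (\<forall>i<k. \<exists>e\<in>Mor. r e = w \<and> d e = unitvec i))"

lemma path_of_degree_exists:
  assumes ns: no_sources and w: "w \<in> Mor" "d w = (\<lambda>_. 0)" and p: "p \<in> Nk k"
  shows "\<exists>\<alpha>\<in>Mor. r \<alpha> = w \<and> d \<alpha> = p"
  using p
proof (induction rule: Nk_induct)
  case zero
  then show ?case using w vertex_range_source by auto
next
  case (unitvec p i)
  then obtain \<alpha> where \<alpha>: "\<alpha> \<in> Mor" "r \<alpha> = w" "d \<alpha> = p" by blast
  obtain e where e: "e \<in> Mor" "r e = s \<alpha>" "d e = unitvec i"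
    using ns source_in_Mor[OF \<alpha>(1)] degree_source[OF \<alpha>(1)] unitvec(2) unfolding no_sources_def by blast
  then show ?case using cmp_in_Mor[OF \<alpha>(1) e(1)] range_cmp[OF \<alpha>(1) e(1)] degree_cmp[OF \<alpha>(1) e(1)] \<alpha>
    by auto
qed

definition all_ones :: "nat \<Rightarrow> nat" where
  "all_ones = (\<lambda>i. if i < k then 1 else 0)"

definition extend :: "'a \<Rightarrow> 'a" where
  "extend l = (SOME l'. \<exists>\<alpha>\<in>Mor. r \<alpha> = s l \<and> d \<alpha> = all_ones \<and> l' = cmp l \<alpha>)"

lemma extend:
  assumes ns: no_sources and l: "l \<in> Mor"
  shows "\<exists>\<alpha>\<in>Mor. r \<alpha> = s l \<and> d \<alpha> = all_ones \<and> extend l = cmp l \<alpha>"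
proof -
  have "all_ones \<in> Nk k" by (simp add: all_ones_def Nk_def)
  then have "\<exists>\<alpha>\<in>Mor. r \<alpha> = s l \<and> d \<alpha> = all_ones"
    using path_of_degree_exists[OF ns source_in_Mor[OF l] degree_source[OF l]] by blast
  then have "\<exists>l'. \<exists>\<alpha>\<in>Mor. r \<alpha> = s l \<and> d \<alpha> = all_ones \<and> l' = cmp l \<alpha>" by blast
  from someI_ex[OF this] show ?thesis unfolding extend_def .
qed

lemma funpow_extend:
  assumes ns: no_sources and \<eta>: "\<eta> \<in> Mor"
  shows "(extend ^^ j) \<eta> \<in> Mor \<and> d ((extend ^^ j) \<eta>) = (\<lambda>i. d \<eta> i + j * all_ones i) \<and>
    r ((extend ^^ j) \<eta>) = r \<eta>"
proof (induction j)
  case (Suc j)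
  then obtain \<alpha> where \<alpha>: "\<alpha> \<in> Mor" "r \<alpha> = s ((extend ^^ j) \<eta>)" "d \<alpha> = all_ones"
    and "extend ((extend ^^ j) \<eta>) = cmp ((extend ^^ j) \<eta>) \<alpha>"
    using extend[OF ns] by blast
  then show ?case using Suc cmp_in_Mor range_cmp degree_cmp by auto
qed (use \<eta> in simp)

lemma seg_funpow_extend:
  assumes ns: no_sources and \<eta>: "\<eta> \<in> Mor" and j: "j \<le> j'"
    and xb: "x \<le> b" "b \<le> d ((extend ^^ j) \<eta>)"
  shows "seg ((extend ^^ j') \<eta>) x b = seg ((extend ^^ j) \<eta>) x b"
  using j
proof (induction j' rule: dec_induct)
  case (step j')
  let ?l = "(extend ^^ j') \<eta>"
  have l: "?l \<in> Mor" using funpow_extend[OF ns \<eta>] by blast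
  obtain \<alpha> where \<alpha>: "\<alpha> \<in> Mor" "r \<alpha> = s ?l" "extend ?l = cmp ?l \<alpha>"
    using extend[OF ns l] by blast
  have "d ((extend ^^ j) \<eta>) \<le> d ?l"
    using step(1) funpow_extend[OF ns \<eta>] by (auto simp: le_fun_def intro: mult_le_mono1)
  then have "b \<le> d ?l" using xb(2) by (rule order_trans[rotated])
  then show ?case using seg_cmp[OF l \<alpha>(1) \<alpha>(2)[symmetric] xb(1)] \<alpha>(3) step(3) by simp
qed simp

lemma le_degree_funpow_extend:
  assumes ns: no_sources and \<eta>: "\<eta> \<in> Mor" and p: "p \<in> Nk k" and j: "(\<Sum>i<k. p i) \<le> j"
  shows "p \<le> d ((extend ^^ j) \<eta>)"
proof -
  have "p i \<le> d \<eta> i + j * all_ones i" for i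
  proof (cases "i < k")
    case True
    then have "p i \<le> (\<Sum>i<k. p i)" by (intro member_le_sum) auto
    then show ?thesis using True j by (simp add: all_ones_def)
  qed (use p in \<open>simp add: Nk_def\<close>)
  then show ?thesis using funpow_extend[OF ns \<eta>] by (simp add: le_fun_def)
qed

text \<open>Without sources every finite path is the initial segment of an infinite path: keep extending
  it by paths of degree \<open>(1, \<dots>, 1)\<close>.\<close>

definition inf_extension :: "'a \<Rightarrow> (nat \<Rightarrow> nat) \<Rightarrow> (nat \<Rightarrow> nat) \<Rightarrow> 'a" where
  "inf_extension \<eta> a b = seg ((extend ^^ (\<Sum>i<k. b i)) \<eta>) a b"

lemma inf_extension:
  assumes ns: no_sources and \<eta>: "\<eta> \<in> Mor"
  shows "inf_extension \<eta> \<in> inf_paths k Mor r s cmp d"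
    and "inf_extension \<eta> (\<lambda>_. 0) (\<lambda>_. 0) = r \<eta>"
    and "inf_extension \<eta> (\<lambda>_. 0) (d \<eta>) = \<eta>"
proof -
  show "inf_extension \<eta> (\<lambda>_. 0) (\<lambda>_. 0) = r \<eta>"
    by (simp add: inf_extension_def seg_zero_zero \<eta>)
  show "inf_extension \<eta> (\<lambda>_. 0) (d \<eta>) = \<eta>"
    unfolding inf_extension_def
    using seg_funpow_extend[OF ns \<eta>, of 0 "\<Sum>i<k. d \<eta> i" "\<lambda>_. 0" "d \<eta>"] seg_zero_degree[OF \<eta>]
    by (simp add: le_fun_def)
  have segment: "inf_extension \<eta> m n \<in> Mor \<and> d (inf_extension \<eta> m n) = (\<lambda>i. n i - m i)"
    if n: "n \<in> Nk k" and mn: "m \<le> n" for m n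
  proof -
    let ?l = "(extend ^^ (\<Sum>i<k. n i)) \<eta>"
    have "?l \<in> Mor" using funpow_extend[OF ns \<eta>] by blast
    moreover have "n \<le> d ?l" using le_degree_funpow_extend[OF ns \<eta> n] by simp
    ultimately show ?thesis
      unfolding inf_extension_def using seg_props(1,2)[OF _ mn order.refl] by blast
  qed
  have composition: "s (inf_extension \<eta> m n) = r (inf_extension \<eta> n p) \<and>
      inf_extension \<eta> m p = cmp (inf_extension \<eta> m n) (inf_extension \<eta> n p)"
    if n: "n \<in> Nk k" and p: "p \<in> Nk k" and mn: "m \<le> n" and np: "n \<le> p" for m n p
  proof -
    let ?l = "(extend ^^ (\<Sum>i<k. p i)) \<eta>"
    have l: "?l \<in> Mor" using funpow_extend[OF ns \<eta>] by blast
    have pd: "p \<le> d ?l" using le_degree_funpow_extend[OF ns \<eta> p] by simp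
    have nd: "n \<le> d ((extend ^^ (\<Sum>i<k. n i)) \<eta>)" using le_degree_funpow_extend[OF ns \<eta> n] by simp
    have "(\<Sum>i<k. n i) \<le> (\<Sum>i<k. p i)" using np unfolding le_fun_def by (intro sum_mono) auto
    from seg_funpow_extend[OF ns \<eta> this mn nd] have "inf_extension \<eta> m n = seg ?l m n"
      unfolding inf_extension_def by simp
    moreover have "inf_extension \<eta> n p = seg ?l n p" "inf_extension \<eta> m p = seg ?l m p"
      by (simp_all add: inf_extension_def)
    ultimately show ?thesis using seg_props(3,4)[OF l mn np pd] by simp
  qed
  show "inf_extension \<eta> \<in> inf_paths k Mor r s cmp d"
    unfolding inf_paths_def using segment composition by blast
qed

definition paths_from :: "'a \<Rightarrow> (nat \<Rightarrow> nat) \<Rightarrow> 'a set" where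
  "paths_from v p = {l\<in>Mor. r l = v \<and> d l = p}"

text \<open>Compare the two shifts of an infinite path extending \<open>\<zeta>\<alpha>\<close>.\<close>

lemma periodic_tail_extensions_subset:
  assumes ns: no_sources and m: "m \<in> Nk k" and n: "n \<in> Nk k"
    and \<zeta>: "\<zeta> \<in> Mor" "r \<zeta> = v" "m \<le> d \<zeta>" "n \<le> d \<zeta>"
    and per: "\<forall>x\<in>Zcyl k Mor r s cmp d v. path_eq k (shift m x) (shift n x)"
  shows "cmp (tail \<zeta> m) ` paths_from (s \<zeta>) m \<subseteq> cmp (tail \<zeta> n) ` paths_from (s \<zeta>) n"
proof
  fix \<gamma> assume "\<gamma> \<in> cmp (tail \<zeta> m) ` paths_from (s \<zeta>) m"
  then obtain \<alpha> where \<gamma>: "\<gamma> = cmp (tail \<zeta> m) \<alpha>" and \<alpha>: "\<alpha> \<in> Mor" "s \<zeta> = r \<alpha>" "d \<alpha> = m"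
    by (auto simp: paths_from_def)
  define a where "a = d \<zeta>"
  define \<eta> where "\<eta> = cmp \<zeta> \<alpha>"
  have a: "a \<in> Nk k" using degree_in_Nk[OF \<zeta>(1)] by (simp add: a_def)
  have am: "(\<lambda>i. a i + m i) \<in> Nk k" "(\<lambda>i. a i + n i) \<in> Nk k" using Nk_add a m n by auto
  have a_le: "a \<le> (\<lambda>i. a i + m i)" "a \<le> (\<lambda>i. a i + n i)" by (auto simp: le_fun_def)
  have \<eta>: "\<eta> \<in> Mor" "d \<eta> = (\<lambda>i. a i + m i)"
    using cmp_in_Mor[OF \<zeta>(1) \<alpha>(1,2)] degree_cmp[OF \<zeta>(1) \<alpha>(1,2)] \<alpha>(3) by (simp_all add: \<eta>_def a_def)
  define z where "z = inf_extension \<eta>"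
  have z: "z \<in> inf_paths k Mor r s cmp d" "z (\<lambda>_. 0) (\<lambda>_. 0) = r \<eta>" "z (\<lambda>_. 0) (\<lambda>i. a i + m i) = \<eta>"
    using inf_extension[OF ns \<eta>(1)] \<eta>(2) by (simp_all add: z_def)
  have z_seg: "z p q = seg \<eta> p q" if "p \<in> Nk k" "q \<in> Nk k" "p \<le> q" "q \<le> (\<lambda>i. a i + m i)" for p q
    using inf_path_eq_seg[OF z(1) that(1,2) am(1) that(3,4)] z(3) by simp
  have "z \<in> Zcyl k Mor r s cmp d v"
    using z(1,2) range_cmp[OF \<zeta>(1) \<alpha>(1,2)] \<zeta>(2) by (simp add: Zcyl_def \<eta>_def)
  then have "shift m z (\<lambda>_. 0) a = shift n z (\<lambda>_. 0) a"
    using per a unfolding path_eq_def by (simp add: le_fun_def)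
  then have shifts: "z m (\<lambda>i. a i + m i) = z n (\<lambda>i. a i + n i)" by (simp add: shift_def add.commute)
  have "z m (\<lambda>i. a i + m i) = cmp (tail \<zeta> m) \<alpha>"
    using z_seg[OF m am(1) order.trans[OF \<zeta>(3)[folded a_def] a_le(1)] order.refl]
      seg_to_degree[OF \<eta>(1)] factor_cmp_prefix(2)[OF \<zeta>(1) \<alpha>(1,2) \<zeta>(3)] \<eta>(2) a_le(1)
    unfolding \<eta>_def by (simp add: le_fun_def)
  moreover have "z n a = tail \<zeta> n"
    using z_seg[OF n a \<zeta>(4)[folded a_def] a_le(1)] seg_cmp[OF \<zeta>(1) \<alpha>(1,2) \<zeta>(4) order.refl]
      seg_to_degree[OF \<zeta>(1) \<zeta>(4)]
    unfolding \<eta>_def a_def by simp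
  moreover note inf_path[OF z(1) n a am(2) \<zeta>(4)[folded a_def] a_le(2)]
  moreover note inf_path[OF z(1) a am(2) am(2) a_le(2) order.refl]
  ultimately have "\<gamma> = cmp (tail \<zeta> n) (z a (\<lambda>i. a i + n i))"
    and "z a (\<lambda>i. a i + n i) \<in> paths_from (s \<zeta>) n"
    using \<gamma> shifts source_tail[OF \<zeta>(1) \<zeta>(4)] by (auto simp: paths_from_def)
  then show "\<gamma> \<in> cmp (tail \<zeta> n) ` paths_from (s \<zeta>) n" by blast
qed

lemma periodic_tail_extensions_eq:
  assumes ns: no_sources and m: "m \<in> Nk k" and n: "n \<in> Nk k"
    and \<zeta>: "\<zeta> \<in> Mor" "r \<zeta> = v" "m \<le> d \<zeta>" "n \<le> d \<zeta>"
    and per: "\<forall>x\<in>Zcyl k Mor r s cmp d v. path_eq k (shift m x) (shift n x)"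
  shows "cmp (tail \<zeta> m) ` paths_from (s \<zeta>) m = cmp (tail \<zeta> n) ` paths_from (s \<zeta>) n"
proof -
  have "\<forall>x\<in>Zcyl k Mor r s cmp d v. path_eq k (shift n x) (shift m x)"
    using per unfolding path_eq_def by metis
  then show ?thesis
    using periodic_tail_extensions_subset[OF ns m n \<zeta> per]
      periodic_tail_extensions_subset[OF ns n m \<zeta>(1,2,4,3)] by blast
qed

end

section \<open>The weighted matrices \<open>B\<^sub>i(y, \<beta>)\<close>\<close>

lemma ln_exp_mult_prod_power:
  fixes t :: "nat \<Rightarrow> real"
  assumes "\<forall>i<k. t i > 0"
  shows "ln (exp c * (\<Prod>i<k. t i ^ q i)) = c + (\<Sum>i<k. real (q i) * ln (t i))"
proof -
  have "(\<Prod>i<k. t i ^ q i) > 0" using assms by (intro prod_pos) auto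
  then have "ln (exp c * (\<Prod>i<k. t i ^ q i)) = c + ln (\<Prod>i<k. t i ^ q i)"
    by (simp add: ln_mult_pos)
  also have "ln (\<Prod>i<k. t i ^ q i) = (\<Sum>i<k. ln (t i ^ q i))"
    using assms by (intro ln_prod) auto
  also have "\<dots> = (\<Sum>i<k. real (q i) * ln (t i))"
    using assms by (intro sum.cong refl) (simp add: ln_realpow)
  finally show ?thesis .
qed

locale finite_k_graph = k_graph +
  assumes finite: "finite_kgraph k Mor d"
begin

lemma finite_paths_from:
  assumes "p \<in> Nk k"
  shows "finite (paths_from v p)"
proof -
  have "finite {l\<in>Mor. d l = p}" using finite assms unfolding finite_kgraph_def by blast
  then show ?thesis by (rule rev_finite_subset) (auto simp: paths_from_def)
qed

lemma finite_vertices: "finite (vertices Mor d)"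
  using finite unfolding finite_kgraph_def vertices_def by auto

lemma sum_paths_from_add:
  assumes p: "p \<in> Nk k" and q: "q \<in> Nk k"
  shows "(\<Sum>\<gamma>\<in>paths_from v (\<lambda>i. p i + q i). G \<gamma>) =
    (\<Sum>\<alpha>\<in>paths_from v p. \<Sum>\<gamma>\<in>paths_from (s \<alpha>) q. G (cmp \<alpha> \<gamma>))"
proof -
  let ?S = "Sigma (paths_from v p) (\<lambda>\<alpha>. paths_from (s \<alpha>) q)"
  have inj: "inj_on (\<lambda>(\<alpha>, \<gamma>). cmp \<alpha> \<gamma>) ?S"
  proof (rule inj_onI, clarsimp)
    fix a g a' g'
    assume "a \<in> paths_from v p" "g \<in> paths_from (s a) q" "a' \<in> paths_from v p"
      "g' \<in> paths_from (s a') q" "cmp a g = cmp a' g'"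
    then show "a = a' \<and> g = g'"
      using factor_cmp[of a g "cmp a g" p] factor_cmp[of a' g' "cmp a' g'" p]
      by (auto simp: paths_from_def)
  qed
  have image: "(\<lambda>(\<alpha>, \<gamma>). cmp \<alpha> \<gamma>) ` ?S = paths_from v (\<lambda>i. p i + q i)"
  proof
    show "(\<lambda>(\<alpha>, \<gamma>). cmp \<alpha> \<gamma>) ` ?S \<subseteq> paths_from v (\<lambda>i. p i + q i)"
      using cmp_in_Mor range_cmp degree_cmp by (auto simp: paths_from_def)
    show "paths_from v (\<lambda>i. p i + q i) \<subseteq> (\<lambda>(\<alpha>, \<gamma>). cmp \<alpha> \<gamma>) ` ?S"
    proof
      fix g assume g: "g \<in> paths_from v (\<lambda>i. p i + q i)"
      then have pg: "g \<in> Mor" "p \<le> d g" by (auto simp: paths_from_def le_fun_def)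
      note F = factorisation[OF pg]
      have "head g p \<in> paths_from v p" "tail g p \<in> paths_from (s (head g p)) q"
        using F(1-3,5,6) range_head[OF pg] g by (auto simp: paths_from_def)
      then show "g \<in> (\<lambda>(\<alpha>, \<gamma>). cmp \<alpha> \<gamma>) ` ?S" using F(4) by force
    qed
  qed
  have "(\<Sum>\<alpha>\<in>paths_from v p. \<Sum>\<gamma>\<in>paths_from (s \<alpha>) q. G (cmp \<alpha> \<gamma>)) = (\<Sum>(\<alpha>, \<gamma>)\<in>?S. G (cmp \<alpha> \<gamma>))"
    using finite_paths_from[OF p] finite_paths_from[OF q] by (simp add: sum.Sigma)
  also have "\<dots> = (\<Sum>\<gamma>\<in>paths_from v (\<lambda>i. p i + q i). G \<gamma>)"
    using sum.reindex[OF inj, of G] image by (simp add: case_prod_unfold)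
  finally show ?thesis by simp
qed

end

locale weighted_k_graph = finite_k_graph +
  fixes y :: "'a \<Rightarrow> real" and \<beta> :: real
  assumes rplus: "rplus_functor Mor r s cmp d y"
begin

abbreviation V :: "'a set" where
  "V \<equiv> vertices Mor d"

abbreviation B :: "nat \<Rightarrow> 'a \<Rightarrow> 'a \<Rightarrow> real" where
  "B i \<equiv> B_mat Mor r s d y \<beta> i"

lemma exp_weight_cmp:
  assumes "a \<in> Mor" "b \<in> Mor" "s a = r b"
  shows "exp (- \<beta> * y (cmp a b)) = exp (- \<beta> * y a) * exp (- \<beta> * y b)"
proof -
  have "y (cmp a b) = y a + y b" using rplus assms unfolding rplus_functor_def by blast
  then show ?thesis by (simp add: algebra_simps flip: exp_add)
qed

lemma B_nonneg: "nonneg_mat V (B i)"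
  unfolding nonneg_mat_def B_mat_def by (auto intro: sum_nonneg)

lemma B_mult_vec:
  assumes i: "i < k"
  shows "mat_mult_vec V (B i) h x = (\<Sum>\<gamma>\<in>paths_from x (unitvec i). exp (- \<beta> * y \<gamma>) * h (s \<gamma>))"
proof -
  let ?A = "\<lambda>w. paths_between Mor r s d x (unitvec i) w"
  have fin: "finite (?A w)" for w
    using finite_paths_from[OF unitvec_in_Nk[OF i], of x]
    by (rule rev_finite_subset) (auto simp: paths_from_def paths_between_def)
  have "paths_from x (unitvec i) = (\<Union>w\<in>V. ?A w)"
    using source_in_Mor degree_source by (auto simp: paths_from_def paths_between_def vertices_def)
  then have "(\<Sum>\<gamma>\<in>paths_from x (unitvec i). exp (- \<beta> * y \<gamma>) * h (s \<gamma>))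
      = (\<Sum>w\<in>V. \<Sum>\<gamma>\<in>?A w. exp (- \<beta> * y \<gamma>) * h (s \<gamma>))"
    by (simp only:) (rule sum.UNION_disjoint, use finite_vertices fin in \<open>auto simp: paths_between_def\<close>)
  also have "\<dots> = (\<Sum>w\<in>V. B i x w * h w)"
    unfolding B_mat_def sum_distrib_right by (intro sum.cong refl) (auto simp: paths_between_def)
  finally show ?thesis by (simp add: mat_mult_vec_def)
qed

lemma sum_paths_from_add_weighted:
  assumes p: "p \<in> Nk k" and q: "q \<in> Nk k"
  shows "(\<Sum>\<gamma>\<in>paths_from v (\<lambda>i. p i + q i). exp (- \<beta> * y \<gamma>) * h (s \<gamma>)) =
    (\<Sum>\<alpha>\<in>paths_from v p. exp (- \<beta> * y \<alpha>) * (\<Sum>\<gamma>\<in>paths_from (s \<alpha>) q. exp (- \<beta> * y \<gamma>) * h (s \<gamma>)))"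
  unfolding sum_paths_from_add[OF p q] sum_distrib_left
proof (intro sum.cong refl)
  fix \<alpha> \<gamma> assume "\<alpha> \<in> paths_from v p" "\<gamma> \<in> paths_from (s \<alpha>) q"
  then show "exp (- \<beta> * y (cmp \<alpha> \<gamma>)) * h (s (cmp \<alpha> \<gamma>)) = exp (- \<beta> * y \<alpha>) * (exp (- \<beta> * y \<gamma>) * h (s \<gamma>))"
    using exp_weight_cmp[of \<alpha> \<gamma>] source_cmp[of \<alpha> \<gamma>] by (simp add: paths_from_def)
qed

text \<open>Both sides sum over the paths of degree \<open>e\<^sub>i + e\<^sub>j\<close>, factorised in the two possible orders.\<close>

lemma B_mult_vec_commute:
  assumes i: "i < k" and j: "j < k"
  shows "mat_mult_vec V (B i) (mat_mult_vec V (B j) h) v = mat_mult_vec V (B j) (mat_mult_vec V (B i) h) v"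
proof -
  have "mat_mult_vec V (B i) (mat_mult_vec V (B j) h) v =
      (\<Sum>\<gamma>\<in>paths_from v (\<lambda>l. unitvec i l + unitvec j l). exp (- \<beta> * y \<gamma>) * h (s \<gamma>))"
    if "i < k" "j < k" for i j
    unfolding sum_paths_from_add_weighted[OF unitvec_in_Nk[OF that(1)] unitvec_in_Nk[OF that(2)]]
      B_mult_vec[OF that(1)] B_mult_vec[OF that(2)] ..
  then show ?thesis using i j by (simp add: add.commute)
qed

lemma sum_paths_from_common_eigenvector:
  assumes eigen: "\<forall>i<k. \<forall>x\<in>V. mat_mult_vec V (B i) u x = t i * u x"
    and w: "w \<in> V" and p: "p \<in> Nk k"
  shows "(\<Sum>\<alpha>\<in>paths_from w p. exp (- \<beta> * y \<alpha>) * u (s \<alpha>)) = (\<Prod>i<k. t i ^ p i) * u w"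
  using p w
proof (induction arbitrary: w rule: Nk_induct)
  case zero
  then have "w \<in> Mor" "d w = (\<lambda>_. 0)" by (auto simp: vertices_def)
  then have "paths_from w (\<lambda>_. 0) = {w}" and "s w = w"
    using vertex_range_source by (auto simp: paths_from_def)
  moreover have "y w = 0" using rplus zero.prems by (simp add: rplus_functor_def)
  ultimately show ?case by simp
next
  case (unitvec p i)
  have s_vertex: "s \<alpha> \<in> V" if "\<alpha> \<in> paths_from w p" for \<alpha>
    using that source_in_Mor degree_source by (auto simp: paths_from_def vertices_def)
  have "(\<Sum>\<alpha>\<in>paths_from w (\<lambda>j. p j + unitvec i j). exp (- \<beta> * y \<alpha>) * u (s \<alpha>))
      = (\<Sum>\<alpha>\<in>paths_from w p. exp (- \<beta> * y \<alpha>) * (t i * u (s \<alpha>)))"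
    unfolding sum_paths_from_add_weighted[OF unitvec.hyps(1) unitvec_in_Nk[OF unitvec.hyps(2)]]
    using B_mult_vec[OF unitvec.hyps(2)] eigen unitvec.hyps(2) s_vertex
    by (intro sum.cong refl) (metis (no_types, lifting))
  also have "\<dots> = t i * (\<Sum>\<alpha>\<in>paths_from w p. exp (- \<beta> * y \<alpha>) * u (s \<alpha>))"
    by (simp add: sum_distrib_left mult_ac)
  also have "\<dots> = t i * ((\<Prod>j<k. t j ^ p j) * u w)"
    using unitvec.IH[OF unitvec.prems] by simp
  also have "\<dots> = (\<Prod>j<k. t j ^ (p j + unitvec i j)) * u w"
  proof -
    have "(\<Prod>j<k. t j ^ unitvec i j) = (\<Prod>j<k. if j = i then t j else 1)"
      by (intro prod.cong) (auto simp: unitvec_def)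
    also have "\<dots> = t i" using unitvec.hyps(2) by simp
    finally show ?thesis by (simp add: power_add prod.distrib mult_ac)
  qed
  finally show ?case .
qed

lemma sum_tail_extensions:
  assumes eigen: "\<forall>i<k. \<forall>x\<in>V. mat_mult_vec V (B i) u x = t i * u x"
    and \<zeta>: "\<zeta> \<in> Mor" "q \<le> d \<zeta>" and q: "q \<in> Nk k"
  shows "(\<Sum>\<eta>\<in>cmp (tail \<zeta> q) ` paths_from (s \<zeta>) q. exp (- \<beta> * y \<eta>) * u (s \<eta>))
    = exp (- \<beta> * y (tail \<zeta> q)) * (\<Prod>i<k. t i ^ q i) * u (s \<zeta>)"
proof -
  note F = factorisation[OF \<zeta>]
  have s_tail: "s (tail \<zeta> q) = s \<zeta>" using source_tail[OF \<zeta>] .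
  have "inj_on (cmp (tail \<zeta> q)) (paths_from (s \<zeta>) q)"
  proof (rule inj_onI)
    have "tail (cmp (tail \<zeta> q) x) (d (tail \<zeta> q)) = x" if "x \<in> paths_from (s \<zeta>) q" for x
      using that factor_cmp(2)[OF F(2) _ _ refl refl, of x] s_tail by (simp add: paths_from_def)
    then show "x = x'" if "x \<in> paths_from (s \<zeta>) q" "x' \<in> paths_from (s \<zeta>) q"
      "cmp (tail \<zeta> q) x = cmp (tail \<zeta> q) x'" for x x'
      using that by metis
  qed
  then have "(\<Sum>\<eta>\<in>cmp (tail \<zeta> q) ` paths_from (s \<zeta>) q. exp (- \<beta> * y \<eta>) * u (s \<eta>))
      = (\<Sum>\<alpha>\<in>paths_from (s \<zeta>) q. exp (- \<beta> * y (cmp (tail \<zeta> q) \<alpha>)) * u (s (cmp (tail \<zeta> q) \<alpha>)))"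
    by (simp add: sum.reindex)
  also have "\<dots> = (\<Sum>\<alpha>\<in>paths_from (s \<zeta>) q. exp (- \<beta> * y (tail \<zeta> q)) * (exp (- \<beta> * y \<alpha>) * u (s \<alpha>)))"
  proof (intro sum.cong refl)
    fix \<alpha> assume "\<alpha> \<in> paths_from (s \<zeta>) q"
    then show "exp (- \<beta> * y (cmp (tail \<zeta> q) \<alpha>)) * u (s (cmp (tail \<zeta> q) \<alpha>))
        = exp (- \<beta> * y (tail \<zeta> q)) * (exp (- \<beta> * y \<alpha>) * u (s \<alpha>))"
      using exp_weight_cmp[OF F(2), of \<alpha>] source_cmp[OF F(2), of \<alpha>] s_tail
      by (simp add: paths_from_def)
  qed
  also have "\<dots> = exp (- \<beta> * y (tail \<zeta> q)) * ((\<Prod>i<k. t i ^ q i) * u (s \<zeta>))"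
    using sum_paths_from_common_eigenvector[OF eigen _ q, of "s \<zeta>"] source_in_Mor[OF \<zeta>(1)]
      degree_source[OF \<zeta>(1)]
    by (simp add: sum_distrib_left[symmetric] vertices_def)
  finally show ?thesis by (simp add: mult.assoc)
qed

definition log_weight :: "'a \<Rightarrow> real" where
  "log_weight l = y l + (1 / \<beta>) * ln (\<Prod>i<k. spectral_radius_mat V (B i) ^ d l i)"

lemma log_weight_eq:
  assumes "\<beta> \<noteq> 0" and \<rho>: "\<forall>i<k. spectral_radius_mat V (B i) = t i \<and> t i > 0"
  shows "\<beta> * log_weight l = \<beta> * y l + (\<Sum>i<k. real (d l i) * ln (t i))"
proof -
  have "(\<Prod>i<k. spectral_radius_mat V (B i) ^ d l i) = (\<Prod>i<k. t i ^ d l i)"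
    using \<rho> by (intro prod.cong) simp_all
  then show ?thesis
    using assms ln_exp_mult_prod_power[of k t 0 "d l"] by (simp add: log_weight_def distrib_left)
qed

lemma equal_weights_log_weight_tail:
  assumes \<beta>: "\<beta> \<noteq> 0" and \<rho>: "\<forall>i<k. spectral_radius_mat V (B i) = t i \<and> t i > 0"
    and \<zeta>: "\<zeta> \<in> Mor" "m \<le> d \<zeta>" "n \<le> d \<zeta>"
    and weights: "exp (- \<beta> * y (tail \<zeta> m)) * (\<Prod>i<k. t i ^ m i)
      = exp (- \<beta> * y (tail \<zeta> n)) * (\<Prod>i<k. t i ^ n i)"
  shows "log_weight (tail \<zeta> m) = log_weight (tail \<zeta> n)"
proof -
  let ?L = "\<lambda>q. \<Sum>i<k. real (q i) * ln (t i)"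
  have "- \<beta> * y (tail \<zeta> m) + ?L m = - \<beta> * y (tail \<zeta> n) + ?L n"
    using arg_cong[OF weights, of ln] ln_exp_mult_prod_power[of k t] \<rho> by simp
  moreover have "?L (\<lambda>i. d \<zeta> i - q i) = ?L (d \<zeta>) - ?L q" if "q \<le> d \<zeta>" for q
    using that by (simp add: le_fun_def of_nat_diff left_diff_distrib sum_subtractf)
  ultimately have "\<beta> * log_weight (tail \<zeta> m) = \<beta> * log_weight (tail \<zeta> n)"
    using log_weight_eq[OF \<beta> \<rho>] factorisation(6)[OF \<zeta>(1) \<zeta>(2)] factorisation(6)[OF \<zeta>(1) \<zeta>(3)] \<zeta>
    by simp
  then show ?thesis using \<beta> by simp
qed

end

section \<open>Irreducible coordinate matrices\<close>

locale irreducible_weighted_k_graph = weighted_k_graph +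
  assumes irreducible: "\<forall>i<k. irreducible_mat V (coord_mat Mor r s d i)"
begin

lemma coord_mat_nonneg: "nonneg_mat V (coord_mat Mor r s d i)"
  unfolding nonneg_mat_def coord_mat_def by simp

lemma no_sources: no_sources
  unfolding no_sources_def
proof (intro ballI impI allI)
  fix w i assume "w \<in> Mor" "d w = (\<lambda>_. 0)" "i < k"
  then have "w \<in> V" "irreducible_mat V (coord_mat Mor r s d i)"
    using irreducible by (simp_all add: vertices_def)
  then obtain u where "u \<in> V" "coord_mat Mor r s d i w u > 0"
    using irreducible_mat_row_pos[OF finite_vertices coord_mat_nonneg] by blast
  then have "paths_between Mor r s d w (unitvec i) u \<noteq> {}" by (auto simp: coord_mat_def)
  then show "\<exists>e\<in>Mor. r e = w \<and> d e = unitvec i" by (auto simp: paths_between_def)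
qed

lemma B_irreducible:
  assumes i: "i < k"
  shows "irreducible_mat V (B i)"
proof (rule irreducible_mat_transfer[OF finite_vertices coord_mat_nonneg B_nonneg])
  show "\<forall>v\<in>V. \<forall>w\<in>V. 0 < coord_mat Mor r s d i v w \<longleftrightarrow> 0 < B i v w"
  proof (intro ballI)
    fix v w
    have "finite (paths_between Mor r s d v (unitvec i) w)"
      using finite_paths_from[OF unitvec_in_Nk[OF i], of v]
      by (rule rev_finite_subset) (auto simp: paths_from_def paths_between_def)
    then show "0 < coord_mat Mor r s d i v w \<longleftrightarrow> 0 < B i v w"
      unfolding B_mat_def coord_mat_def
      by (cases "paths_between Mor r s d v (unitvec i) w = {}") (auto intro!: sum_pos simp: card_gt_0_iff)
  qed
qed (use irreducible i in blast)

text \<open>The matrices \<open>B\<^sub>i\<close> commute, so each \<open>B\<^sub>i\<close> maps the Perron eigenvector of \<open>B\<^sub>0\<close> to an eigenvector of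
  \<open>B\<^sub>0\<close> for the same eigenvalue, hence to a positive multiple of itself.\<close>

lemma common_eigenvector:
  assumes k: "0 < k" and ne: "V \<noteq> {}"
  shows "\<exists>u t. (\<forall>v\<in>V. u v > 0) \<and> (\<forall>i<k. t i > 0 \<and> (\<forall>v\<in>V. mat_mult_vec V (B i) u v = t i * u v))"
proof -
  obtain u t0 where u: "\<forall>v\<in>V. u v > 0" "\<forall>v\<in>V. mat_mult_vec V (B 0) u v = t0 * u v"
    using perron_frobenius_eigenvector[OF finite_vertices ne B_nonneg B_irreducible[OF k]] by blast
  have "\<exists>c>0. \<forall>v\<in>V. mat_mult_vec V (B j) u v = c * u v" if j: "j < k" for j
  proof -
    have "mat_mult_vec V (B 0) (mat_mult_vec V (B j) u) w = t0 * mat_mult_vec V (B j) u w" if "w \<in> V" for w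
    proof -
      have "mat_mult_vec V (B 0) (mat_mult_vec V (B j) u) w = mat_mult_vec V (B j) (mat_mult_vec V (B 0) u) w"
        using B_mult_vec_commute[OF k j] .
      also have "\<dots> = mat_mult_vec V (B j) (\<lambda>x. t0 * u x) w"
        unfolding mat_mult_vec_def using u(2) by (intro sum.cong refl) (simp add: mat_mult_vec_def)
      finally show ?thesis by (simp add: mat_mult_vec_def sum_distrib_left mult_ac)
    qed
    then obtain c where c: "\<forall>v\<in>V. mat_mult_vec V (B j) u v = c * u v"
      using irreducible_mat_eigenvector_unique[OF finite_vertices ne B_nonneg B_irreducible[OF k] u]
      by blast
    obtain v where "v \<in> V" using ne by blast
    then have "0 < c * u v"
      using irreducible_mat_mult_pos_vec[OF finite_vertices B_nonneg B_irreducible[OF j] u(1)] c by simp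
    moreover have "u v > 0" using u(1) \<open>v \<in> V\<close> by blast
    ultimately have "c > 0" by (simp add: zero_less_mult_iff)
    then show ?thesis using c by blast
  qed
  then have "\<forall>j. \<exists>c. j < k \<longrightarrow> c > 0 \<and> (\<forall>v\<in>V. mat_mult_vec V (B j) u v = c * u v)" by blast
  then obtain t where "\<forall>j. j < k \<longrightarrow> t j > 0 \<and> (\<forall>v\<in>V. mat_mult_vec V (B j) u v = t j * u v)"
    by (rule choice[THEN exE])
  then show ?thesis using u(1) by blast
qed

text \<open>The two equal sets of extensions of \<open>periodic_tail_extensions_eq\<close> carry the same weight,
  measured with the common Perron eigenvector.\<close>

lemma periodic_pair_equal_log_weight:
  assumes \<beta>: "\<beta> \<noteq> 0" and v: "v \<in> V" and m: "m \<in> Nk k" and n: "n \<in> Nk k"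
    and per: "\<forall>x\<in>Zcyl k Mor r s cmp d v. path_eq k (shift m x) (shift n x)"
  shows "\<exists>a. \<exists>l\<in>Mor. \<exists>l'\<in>Mor. m \<le> a \<and> n \<le> a \<and> d l = (\<lambda>i. a i - m i) \<and> d l' = (\<lambda>i. a i - n i) \<and>
    log_weight l = log_weight l'"
proof (cases "k = 0")
  case True
  then have "m = (\<lambda>_. 0)" "n = (\<lambda>_. 0)" using m n by (auto simp: Nk_def)
  then show ?thesis using v by (auto simp: vertices_def le_fun_def)
next
  case False
  obtain u t where u: "\<forall>v\<in>V. u v > 0"
    and t: "\<forall>i<k. t i > 0 \<and> (\<forall>v\<in>V. mat_mult_vec V (B i) u v = t i * u v)"
    using common_eigenvector v False by blast
  have eigen: "\<forall>i<k. \<forall>x\<in>V. mat_mult_vec V (B i) u x = t i * u x" using t by blast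
  have \<rho>: "\<forall>i<k. spectral_radius_mat V (B i) = t i \<and> t i > 0"
    using t spectral_radius_mat_pos_eigenvector[OF finite_vertices _ B_nonneg u] v by blast
  define a where "a = (\<lambda>i. max (m i) (n i))"
  have a: "a \<in> Nk k" "m \<le> a" "n \<le> a" using m n by (auto simp: Nk_def a_def le_fun_def)
  obtain \<zeta> where \<zeta>: "\<zeta> \<in> Mor" "r \<zeta> = v" "d \<zeta> = a"
    using path_of_degree_exists[OF no_sources _ _ a(1), of v] v by (auto simp: vertices_def)
  have ma: "m \<le> d \<zeta>" and na: "n \<le> d \<zeta>" using a \<zeta>(3) by simp_all
  have "exp (- \<beta> * y (tail \<zeta> m)) * (\<Prod>i<k. t i ^ m i) * u (s \<zeta>)
      = exp (- \<beta> * y (tail \<zeta> n)) * (\<Prod>i<k. t i ^ n i) * u (s \<zeta>)"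
    using sum_tail_extensions[OF eigen \<zeta>(1) ma m] sum_tail_extensions[OF eigen \<zeta>(1) na n]
      periodic_tail_extensions_eq[OF no_sources m n \<zeta>(1,2) ma na per] by simp
  moreover have "u (s \<zeta>) > 0"
    using u source_in_Mor[OF \<zeta>(1)] degree_source[OF \<zeta>(1)] by (simp add: vertices_def)
  ultimately have "exp (- \<beta> * y (tail \<zeta> m)) * (\<Prod>i<k. t i ^ m i)
      = exp (- \<beta> * y (tail \<zeta> n)) * (\<Prod>i<k. t i ^ n i)"
    by simp
  then have "log_weight (tail \<zeta> m) = log_weight (tail \<zeta> n)"
    using equal_weights_log_weight_tail[OF \<beta> \<rho> \<zeta>(1) ma na] by blast
  then show ?thesis
    using factorisation(2,6)[OF \<zeta>(1) ma] factorisation(2,6)[OF \<zeta>(1) na] a \<zeta>(3) by auto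
qed

end

lemma gen_subgroup_trivial:
  assumes "\<forall>g\<in>S. g = (\<lambda>_. 0)"
  shows "gen_subgroup S = {\<lambda>_. 0}"
proof -
  have "x = (\<lambda>_. 0)" if "x \<in> gen_subgroup S" for x
    using that by induction (use assms in auto)
  then show ?thesis using gen_subgroup.zero by blast
qed

theorem corollary4p11:
  fixes k :: nat and Mor :: "'a set" and r s :: "'a \<Rightarrow> 'a" and cmp :: "'a \<Rightarrow> 'a \<Rightarrow> 'a"
    and d :: "'a \<Rightarrow> nat \<Rightarrow> nat" and y :: "'a \<Rightarrow> real" and \<beta> :: real
  assumes "kgraph k Mor r s cmp d"
    and "finite_kgraph k Mor d"
    and "\<forall>i<k. irreducible_mat (vertices Mor d) (coord_mat Mor r s d i)"
    and "rplus_functor Mor r s cmp d y"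
    and "\<beta> > 0"
    and "\<forall>l\<in>Mor. \<forall>\<nu>\<in>Mor.
           y l + (1 / \<beta>) * ln (\<Prod>i<k. spectral_radius_mat (vertices Mor d) (B_mat Mor r s d y \<beta> i) ^ d l i)
         = y \<nu> + (1 / \<beta>) * ln (\<Prod>i<k. spectral_radius_mat (vertices Mor d) (B_mat Mor r s d y \<beta> i) ^ d \<nu> i)
         \<longrightarrow> d l = d \<nu>"
  shows "aperiodic k Mor r s cmp d"
proof -
  interpret irreducible_weighted_k_graph k Mor r s cmp d y \<beta>
    using assms(1-4) by unfold_locales
  have "m = n" if period: "v \<in> V" "m \<in> Nk k" "n \<in> Nk k"
    "\<forall>x\<in>Zcyl k Mor r s cmp d v. path_eq k (shift m x) (shift n x)" for v m n
  proof -
    obtain a l l' where l: "l \<in> Mor" "l' \<in> Mor" "log_weight l = log_weight l'"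
      and a: "m \<le> a" "n \<le> a" "d l = (\<lambda>i. a i - m i)" "d l' = (\<lambda>i. a i - n i)"
      using periodic_pair_equal_log_weight[OF _ period] assms(5) by auto
    have "d l = d l'" using assms(6) l unfolding log_weight_def by blast
    then have "a i - m i = a i - n i" for i using a(3,4) by metis
    then show "m = n" using a(1,2) unfolding le_fun_def by (metis diff_diff_cancel ext)
  qed
  then have "\<forall>g\<in>per_gens k Mor r s cmp d v. g = (\<lambda>_. 0)" if "v \<in> V" for v
    using that unfolding per_gens_def by force
  then show ?thesis
    unfolding aperiodic_def Per_def using gen_subgroup_trivial by blast
qed

end
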